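(* Let $\mathbb{F}$ be a field of characteristic zero, $P_n=\mathbb{F}[x_1,\dots,x_n]$ and $I_n=\big(x_1^2,\dots,x_n^2,(x_1+\cdots+x_n)^2\big)$. For each integer $k\ge 2$ with $2k-2\le n$, let $D_k$ be the set of square-free monomials of degree $k$ in the variables $x_1,\dots,x_{2k-2}$ that are not divisible by any square-free monomial of degree $k'$ in the variables $x_1,\dots,x_{2k'-2}$ for any $2\le k'<k$. Then a minimal set of generators of the initial ideal $\mathrm{in}(I_n)$ with respect to the reverse lexicographic order is $\{x_1^2,\dots,x_n^2\}\cup\bigcup_{2k-2\le n}D_k$.
   Context: The reverse lexicographic order is taken with $x_1>x_2>\cdots>x_n$. For example $D_2=\{x_1x_2\}$, $D_3=\{x_1x_3x_4,x_2x_3x_4\}$. *)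

theory Defs
  imports Main "HOL-Library.Poly_Mapping"
begin

text \<open>Multivariate polynomials: monomials are exponent vectors nat =>0 nat
  (variable x_i has index i), polynomials are finitely supported maps from monomials to
  coefficients.\<close>

type_synonym monom = "nat \<Rightarrow>\<^sub>0 nat"
type_synonym 'a mpoly = "monom \<Rightarrow>\<^sub>0 'a"

definition tdeg :: "monom \<Rightarrow> nat" where
  "tdeg m = (\<Sum>i\<in>Poly_Mapping.keys m. Poly_Mapping.lookup m i)"

text \<open>Graded reverse lexicographic order with x_1 > x_2 > ... :
  m < m' iff deg m < deg m', or equal degree and at the largest index where they differ
  m has the larger exponent.\<close>
definition drl_less :: "monom \<Rightarrow> monom \<Rightarrow> bool" where
  "drl_less m m' \<longleftrightarrow> tdeg m < tdeg m' \<or>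
     (tdeg m = tdeg m' \<and> m \<noteq> m' \<and>
        (let i = Max {j. Poly_Mapping.lookup m j \<noteq> Poly_Mapping.lookup m' j} in Poly_Mapping.lookup m i > Poly_Mapping.lookup m' i))"

definition lead_monom :: "'a::zero mpoly \<Rightarrow> monom" where
  "lead_monom p = (THE m. m \<in> Poly_Mapping.keys p \<and> (\<forall>m'\<in>Poly_Mapping.keys p. m' \<noteq> m \<longrightarrow> drl_less m' m))"

definition mon :: "monom \<Rightarrow> 'a::{zero,one} mpoly" where
  "mon m = Poly_Mapping.single m 1"

definition var :: "nat \<Rightarrow> 'a::{zero,one} mpoly" where
  "var i = mon (Poly_Mapping.single i 1)"

definition Pring :: "nat \<Rightarrow> 'a::zero mpoly set" where
  "Pring n = {p. \<forall>m\<in>Poly_Mapping.keys p. Poly_Mapping.keys m \<subseteq> {1..n}}"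

definition gen_ideal :: "nat \<Rightarrow> 'a::comm_ring_1 mpoly set \<Rightarrow> 'a mpoly set" where
  "gen_ideal n G = {\<Sum>g\<in>F. q g * g | F q. finite F \<and> F \<subseteq> G \<and> (\<forall>g\<in>F. q g \<in> Pring n)}"

definition In_ideal :: "nat \<Rightarrow> 'a::comm_ring_1 mpoly set" where
  "In_ideal n = gen_ideal n ((\<lambda>i. var i ^ 2) ` {1..n} \<union> {(\<Sum>i=1..n. var i) ^ 2})"

definition initial_ideal :: "nat \<Rightarrow> 'a::comm_ring_1 mpoly set \<Rightarrow> 'a mpoly set" where
  "initial_ideal n I = gen_ideal n {mon (lead_monom f) | f. f \<in> I \<and> f \<noteq> 0}"

definition mdvd :: "monom \<Rightarrow> monom \<Rightarrow> bool" where
  "mdvd m m' \<longleftrightarrow> (\<forall>i. Poly_Mapping.lookup m i \<le> Poly_Mapping.lookup m' i)"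

definition sqfree_monoms :: "nat \<Rightarrow> nat \<Rightarrow> monom set" where
  "sqfree_monoms k r = {m. Poly_Mapping.keys m \<subseteq> {1..r} \<and> (\<forall>i. Poly_Mapping.lookup m i \<le> 1) \<and> tdeg m = k}"

definition D :: "nat \<Rightarrow> monom set" where
  "D k = {m \<in> sqfree_monoms k (2*k-2).
            \<not> (\<exists>k'. 2 \<le> k' \<and> k' < k \<and> (\<exists>m'\<in>sqfree_monoms k' (2*k'-2). mdvd m' m))}"

definition minimal_generators :: "nat \<Rightarrow> 'a::comm_ring_1 mpoly set \<Rightarrow> 'a mpoly set \<Rightarrow> bool" where
  "minimal_generators n G J \<longleftrightarrow> gen_ideal n G = J \<and> (\<forall>g\<in>G. gen_ideal n (G - {g}) \<noteq> J)"

end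

(*
  Modulo the squares x_i^2 a polynomial of P_n is determined by its square-free part, which
  is a function on the subsets of {1..n}; multiplication by l = x_1 + ... + x_n acts on it as
  the up operator (L phi)(S) = sum over i in S of phi(S - {i}) of the Boolean lattice, so the
  square-free part of I_n is the image of L^2.  The Boolean lattice has the Lefschetz
  property: L^t maps the functions on the j-subsets of {1..m} injectively to those on the
  (j+t)-subsets if 2j + t <= m, and surjectively if 2j + t >= m.

  Surjectivity for m = 2k - 2 lets us prescribe L^2 phi to be the indicator of any k-subset S
  of {1..2k-2}; the remaining terms of l^2 x_phi involve a variable beyond x_{2k-2} and are
  smaller in revlex, so x_S is a leading monomial: D_k lies in in(I_n).  Conversely, if S is
  the revlex-leading set of some L^2 phi, induction on the largest variable together with
  injectivity shows that S contains at least k elements of {1..2k-2} for some k >= 2, so x_S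
  is divisible by an element of some D_k.  The squares x_i^2 and the D_k form an antichain
  for divisibility, hence a minimal set of generators.
*)

theory Submission
  imports Defs
begin

section \<open>The up operator of the Boolean lattice\<close>

(* Multiplication by x_1 + ... + x_n on square-free polynomials, see sqfree_part_lin_mult. *)
definition lefschetz :: "(nat set \<Rightarrow> 'a::comm_ring_1) \<Rightarrow> nat set \<Rightarrow> 'a" where
  "lefschetz f S = (\<Sum>i\<in>S. f (S - {i}))"

definition agree_on_level :: "nat \<Rightarrow> nat \<Rightarrow> (nat set \<Rightarrow> 'a) \<Rightarrow> (nat set \<Rightarrow> 'a) \<Rightarrow> bool" where
  "agree_on_level m j f g \<longleftrightarrow> (\<forall>S\<subseteq>{1..m}. card S = j \<longrightarrow> f S = g S)"

lemma lefschetz_pow_Suc: "(lefschetz ^^ Suc t) f S = (\<Sum>i\<in>S. (lefschetz ^^ t) f (S - {i}))"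
  by (simp add: lefschetz_def)

lemma lefschetz_pow_add:
  "(lefschetz ^^ t) (\<lambda>S. f S + g S) S = (lefschetz ^^ t) f S + (lefschetz ^^ t) g S"
  by (induction t arbitrary: S) (simp_all add: lefschetz_def sum.distrib)

lemma lefschetz_pow_cmult: "(lefschetz ^^ t) (\<lambda>S. c * f S) S = c * (lefschetz ^^ t) f S"
  by (induction t arbitrary: S) (simp_all add: lefschetz_def sum_distrib_left)

lemma lefschetz_zero [simp]: "lefschetz (\<lambda>_. 0) = (\<lambda>_. 0)"
  by (simp add: lefschetz_def[abs_def])

lemma lefschetz_pow_diff:
  "(lefschetz ^^ t) (\<lambda>S. f S - g S) S = (lefschetz ^^ t) f S - (lefschetz ^^ t) g S"
  by (induction t arbitrary: S) (simp_all add: lefschetz_def sum_subtractf)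

lemma lefschetz_pow_zero [simp]: "(lefschetz ^^ t) (\<lambda>_. 0) = (\<lambda>_. 0)"
  by (induction t) simp_all

lemma lefschetz_pow_local:
  assumes "finite S" "\<And>T. T \<subseteq> S \<Longrightarrow> card T + t = card S \<Longrightarrow> f T = g T"
  shows "(lefschetz ^^ t) f S = (lefschetz ^^ t) g S"
  using assms
proof (induction t arbitrary: S)
  case (Suc t)
  have "(lefschetz ^^ t) f (S - {i}) = (lefschetz ^^ t) g (S - {i})" if "i \<in> S" for i
  proof (rule Suc.IH)
    fix T assume "T \<subseteq> S - {i}" "card T + t = card (S - {i})"
    moreover have "card S > 0" using Suc.prems(1) that card_gt_0_iff by blast
    ultimately show "f T = g T" using Suc.prems that
      by (intro Suc.prems(2)) (auto simp: card_Diff_singleton)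
  qed (use Suc.prems in auto)
  then show ?case unfolding lefschetz_pow_Suc by simp
qed simp

lemma lefschetz_pow_card_less: "finite S \<Longrightarrow> card S < t \<Longrightarrow> (lefschetz ^^ t) f S = 0"
  using lefschetz_pow_local[of S t f "\<lambda>_. 0"] by simp

lemma lefschetz_pow_insert:
  assumes "finite S" "a \<notin> S"
  shows "(lefschetz ^^ t) f (insert a S) = (lefschetz ^^ t) (\<lambda>T. f (insert a T)) S
      + of_nat t * (lefschetz ^^ (t - 1)) f S"
  using assms
proof (induction t arbitrary: S)
  case (Suc t)
  have "(lefschetz ^^ Suc t) f (insert a S) = (lefschetz ^^ t) f S
      + (\<Sum>i\<in>S. (lefschetz ^^ t) f (insert a (S - {i})))"
    unfolding lefschetz_pow_Suc using Suc.prems by (simp add: insert_Diff_if) (intro sum.cong; auto)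
  also have "(\<Sum>i\<in>S. (lefschetz ^^ t) f (insert a (S - {i}))) =
      (lefschetz ^^ Suc t) (\<lambda>T. f (insert a T)) S
          + of_nat t * (\<Sum>i\<in>S. (lefschetz ^^ (t - 1)) f (S - {i}))"
    unfolding lefschetz_pow_Suc using Suc.prems by (simp add: Suc.IH sum.distrib sum_distrib_left)
  finally show ?case
    by (cases t) (simp_all add: lefschetz_pow_Suc[symmetric] algebra_simps del: funpow.simps)
qed simp

lemma agree_on_level_lefschetz_pow:
  assumes "agree_on_level m j f g"
  shows "agree_on_level m (j + t) ((lefschetz ^^ t) f) ((lefschetz ^^ t) g)"
  unfolding agree_on_level_def
proof (intro allI impI)
  fix S assume S: "S \<subseteq> {1..m}" "card S = j + t"
  show "(lefschetz ^^ t) f S = (lefschetz ^^ t) g S"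
  proof (rule lefschetz_pow_local)
    show "finite S" using S(1) finite_subset by blast
    fix T assume "T \<subseteq> S" "card T + t = card S"
    with S assms show "f T = g T" unfolding agree_on_level_def by auto
  qed
qed

lemma agree_on_level_card_gt:
  assumes "m < j"
  shows "agree_on_level m j f g"
  unfolding agree_on_level_def
proof (intro allI impI)
  fix S :: "nat set" assume "S \<subseteq> {1..m}" "card S = j"
  then have "j \<le> m" using card_mono[OF finite_atLeastAtMost, of S 1 m] by simp
  then show "f S = g S" using assms by simp
qed

lemma agree_on_level_0: "agree_on_level m 0 f g \<longleftrightarrow> f {} = g {}"
  by (auto simp: agree_on_level_def dest: finite_subset[OF _ finite_atLeastAtMost])

lemma agree_on_level_Suc:
  "agree_on_level (Suc m) (Suc j) f g \<longleftrightarrow>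
     agree_on_level m (Suc j) f g \<and> agree_on_level m j (\<lambda>T. f (insert (Suc m) T))
         (\<lambda>T. g (insert (Suc m) T))"
  (is "?lhs \<longleftrightarrow> ?low \<and> ?top")
proof
  assume lhs: ?lhs
  have ?low using lhs unfolding agree_on_level_def by (meson atLeastAtMost_iff le_SucI subset_iff)
  moreover have ?top unfolding agree_on_level_def
  proof (intro allI impI)
    fix T assume T: "T \<subseteq> {1..m}" "card T = j"
    then have "finite T" "Suc m \<notin> T" by (auto intro: finite_subset)
    with T show "f (insert (Suc m) T) = g (insert (Suc m) T)"
      using T by (intro lhs[unfolded agree_on_level_def, rule_format]) auto
  qed
  ultimately show "?low \<and> ?top" ..
next
  assume "?low \<and> ?top"
  show ?lhs unfolding agree_on_level_def
  proof (intro allI impI)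
    fix S assume S: "S \<subseteq> {1..Suc m}" "card S = Suc j"
    show "f S = g S"
    proof (cases "Suc m \<in> S")
      case True
      then have "S = insert (Suc m) (S - {Suc m})" "S - {Suc m} \<subseteq> {1..m}" "card (S - {Suc m}) = j"
        using S by (auto simp: le_Suc_eq)
      then show ?thesis using \<open>?low \<and> ?top\<close> unfolding agree_on_level_def by metis
    next
      case False
      then have "S \<subseteq> {1..m}" using S by (auto simp: le_Suc_eq)
      then show ?thesis using S \<open>?low \<and> ?top\<close> unfolding agree_on_level_def by blast
    qed
  qed
qed

lemma agree_on_level_cong:
  "(\<And>S. S \<subseteq> {1..m} \<Longrightarrow> f S = f' S) \<Longrightarrow> agree_on_level m j f g \<longleftrightarrow> agree_on_level m j f' g"
  by (auto simp: agree_on_level_def)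

lemma agree_on_level_Suc_lefschetz_pow:
  "agree_on_level (Suc m) (Suc j) ((lefschetz ^^ t) f) y \<longleftrightarrow>
     agree_on_level m (Suc j) ((lefschetz ^^ t) f) y \<and>
     agree_on_level m j (\<lambda>T. (lefschetz ^^ t) (\<lambda>U. f (insert (Suc m) U)) T
         + of_nat t * (lefschetz ^^ (t - 1)) f T)
       (\<lambda>T. y (insert (Suc m) T))"
  unfolding agree_on_level_Suc
  by (intro conj_cong refl agree_on_level_cong lefschetz_pow_insert)
      (auto dest: finite_subset[OF _ finite_atLeastAtMost])

lemma lefschetz_pow_injective_slack:
  fixes f f1 :: "nat set \<Rightarrow> 'a::field_char_0"
  assumes IH: "\<forall>j t (f :: nat set \<Rightarrow> 'a). 2*j + t \<le> m \<longrightarrow>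
        agree_on_level m (j + t) ((lefschetz ^^ t) f) (\<lambda>_. 0) \<longrightarrow> agree_on_level m j f (\<lambda>_. 0)"
    and slack: "2*j + t \<le> m" and "0 < t"
    and H0: "agree_on_level m (j + t) ((lefschetz ^^ t) f) (\<lambda>_. 0)"
    and H1: "agree_on_level m (j + t - 1) (\<lambda>T. (lefschetz ^^ t) f1 T
        + of_nat t * (lefschetz ^^ (t - 1)) f T) (\<lambda>_. 0)"
  shows "agree_on_level m j f (\<lambda>_. 0)" and "j = Suc i \<Longrightarrow> agree_on_level m i f1 (\<lambda>_. 0)"
proof -
  show f0: "agree_on_level m j f (\<lambda>_. 0)" using IH slack H0 by blast
  show "agree_on_level m i f1 (\<lambda>_. 0)" if j: "j = Suc i"
  proof (rule IH[rule_format])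
    have "agree_on_level m (j + (t - 1)) ((lefschetz ^^ (t - 1)) f) (\<lambda>_. 0)"
      using agree_on_level_lefschetz_pow[OF f0, of "t - 1"] by simp
    then show "agree_on_level m (i + t) ((lefschetz ^^ t) f1) (\<lambda>_. 0)"
      using H1 j \<open>0 < t\<close> by (auto simp: agree_on_level_def)
  qed (use slack j in simp)
qed

lemma lefschetz_pow_injective_tight:
  fixes f f1 :: "nat set \<Rightarrow> 'a::field_char_0"
  assumes IH: "\<forall>j t (f :: nat set \<Rightarrow> 'a). 2*j + t \<le> m \<longrightarrow>
        agree_on_level m (j + t) ((lefschetz ^^ t) f) (\<lambda>_. 0) \<longrightarrow> agree_on_level m j f (\<lambda>_. 0)"
    and tight: "2*j + t = Suc m" and "0 < t"
    and H0: "agree_on_level m (j + t) ((lefschetz ^^ t) f) (\<lambda>_. 0)"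
    and H1: "agree_on_level m (j + t - 1) (\<lambda>T. (lefschetz ^^ t) f1 T
        + of_nat t * (lefschetz ^^ (t - 1)) f T) (\<lambda>_. 0)"
  shows "agree_on_level m j f (\<lambda>_. 0)" and "j = Suc i \<Longrightarrow> agree_on_level m i f1 (\<lambda>_. 0)"
proof -
  define g where "g S = of_nat t * f S + lefschetz f1 S" for S
  obtain t' where t': "t = Suc t'" using \<open>0 < t\<close> gr0_implies_Suc by blast
  have "(lefschetz ^^ (t - 1)) g S = (lefschetz ^^ t) f1 S
      + of_nat t * (lefschetz ^^ (t - 1)) f S" for S
    unfolding g_def[abs_def] t' by (simp add: lefschetz_pow_add lefschetz_pow_cmult funpow_swap1)
  then have "agree_on_level m (j + (t - 1)) ((lefschetz ^^ (t - 1)) g) (\<lambda>_. 0)"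
    using H1 \<open>0 < t\<close> by (simp add: agree_on_level_def)
  moreover have "2*j + (t - 1) \<le> m" using tight \<open>0 < t\<close> by linarith
  ultimately have g0: "agree_on_level m j g (\<lambda>_. 0)"
    using IH by blast
  have f1_0: "agree_on_level m i f1 (\<lambda>_. 0)" if j: "j = Suc i" for i
  proof (rule IH[rule_format])
    have "agree_on_level m j (lefschetz f1) (\<lambda>S. - of_nat t * f S)"
      using g0 by (auto simp: agree_on_level_def g_def eq_neg_iff_add_eq_0 add.commute)
    then have "agree_on_level m (j + t) ((lefschetz ^^ t) (lefschetz f1)) ((lefschetz ^^ t)
        (\<lambda>S. - of_nat t * f S))"
      by (rule agree_on_level_lefschetz_pow)
    then show "agree_on_level m (i + Suc t) ((lefschetz ^^ Suc t) f1) (\<lambda>_. 0)"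
      using H0 j lefschetz_pow_cmult[of t "- of_nat t" f]
        by (simp add: funpow_swap1 agree_on_level_def)
  qed (use tight j in simp)
  then show "j = Suc i \<Longrightarrow> agree_on_level m i f1 (\<lambda>_. 0)" .
  show "agree_on_level m j f (\<lambda>_. 0)"
  proof (cases j)
    case 0
    have "g {} = of_nat t * f {}" by (simp add: g_def lefschetz_def)
    then show ?thesis using g0 0 \<open>0 < t\<close> by (simp add: agree_on_level_0)
  next
    case (Suc i)
    have "agree_on_level m j (lefschetz f1) (\<lambda>_. 0)"
      using agree_on_level_lefschetz_pow[OF f1_0[OF Suc], of 1] Suc by simp
    then show ?thesis using g0 \<open>0 < t\<close> by (auto simp: agree_on_level_def g_def)
  qed
qed

theorem lefschetz_pow_injective:
  fixes f :: "nat set \<Rightarrow> 'a::field_char_0"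
  assumes "2*j + t \<le> m" "agree_on_level m (j + t) ((lefschetz ^^ t) f) (\<lambda>_. 0)"
  shows "agree_on_level m j f (\<lambda>_. 0)"
  using assms
proof (induction m arbitrary: j t f)
  case 0
  then show ?case by (simp add: agree_on_level_0)
next
  case (Suc m)
  show ?case
  proof (cases "t = 0")
    case True
    then show ?thesis using Suc.prems by simp
  next
    case False
    define f1 where "f1 T = f (insert (Suc m) T)" for T
    have "Suc (j + t - 1) = j + t" using False by simp
    then have H: "agree_on_level m (j + t) ((lefschetz ^^ t) f) (\<lambda>_. 0)"
      "agree_on_level m (j + t - 1) (\<lambda>T. (lefschetz ^^ t) f1 T
          + of_nat t * (lefschetz ^^ (t - 1)) f T) (\<lambda>_. 0)"
      using Suc.prems(2) agree_on_level_Suc_lefschetz_pow[of m "j + t - 1" t f "\<lambda>_. 0"]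
      by (simp_all add: f1_def[abs_def])
    have IH: "\<forall>j t (f :: nat set \<Rightarrow> 'a). 2*j + t \<le> m \<longrightarrow>
        agree_on_level m (j + t) ((lefschetz ^^ t) f) (\<lambda>_. 0) \<longrightarrow> agree_on_level m j f (\<lambda>_. 0)"
      using Suc.IH by blast
    have "agree_on_level m j f (\<lambda>_. 0) \<and> (\<forall>i. j = Suc i \<longrightarrow> agree_on_level m i f1 (\<lambda>_. 0))"
    proof (cases "2*j + t \<le> m")
      case True
      show ?thesis using lefschetz_pow_injective_slack[OF IH True _ H] False by blast
    next
      case False
      then have "2*j + t = Suc m" using Suc.prems(1) by simp
      then show ?thesis using lefschetz_pow_injective_tight[OF IH _ _ H] \<open>t \<noteq> 0\<close> by blast
    qed
    then show ?thesis
      by (cases j) (simp_all add: agree_on_level_0 agree_on_level_Suc f1_def[abs_def])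
  qed
qed

lemma agree_on_level_Suc_lefschetz_pow_glue:
  assumes "agree_on_level m (Suc j) ((lefschetz ^^ t) F0) y"
    and "agree_on_level m j (\<lambda>T. (lefschetz ^^ t) F1 T + of_nat t * (lefschetz ^^ (t - 1)) F0 T)
        (\<lambda>T. y (insert (Suc m) T))"
  shows "agree_on_level (Suc m) (Suc j)
      ((lefschetz ^^ t) (\<lambda>S. if Suc m \<in> S then F1 (S - {Suc m}) else F0 S)) y"
    (is "agree_on_level _ _ ((lefschetz ^^ t) ?G) y")
proof -
  have "(lefschetz ^^ s) ?G T = (lefschetz ^^ s) F0 T"
    and "(lefschetz ^^ s) (\<lambda>U. ?G (insert (Suc m) U)) T = (lefschetz ^^ s) F1 T"
    if T: "T \<subseteq> {1..m}" for T s
  proof -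
    have "finite T" using T finite_subset by blast
    moreover have "Suc m \<notin> U" if "U \<subseteq> T" for U using that T by auto
    ultimately show "(lefschetz ^^ s) ?G T = (lefschetz ^^ s) F0 T"
      "(lefschetz ^^ s) (\<lambda>U. ?G (insert (Suc m) U)) T = (lefschetz ^^ s) F1 T"
      by (auto intro!: lefschetz_pow_local)
  qed
  with assms show ?thesis
    unfolding agree_on_level_Suc_lefschetz_pow by (simp add: agree_on_level_def)
qed

lemma lefschetz_pow_surjective_slack:
  fixes y :: "nat set \<Rightarrow> 'a::field_char_0"
  assumes IH: "\<forall>j t (y :: nat set \<Rightarrow> 'a). m \<le> 2*j + t \<longrightarrow>
      (\<exists>f. agree_on_level m (j + t) ((lefschetz ^^ t) f) y)"
    and slack: "Suc m < 2*j + t"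
  shows "\<exists>F0 F1. agree_on_level m (j + t) ((lefschetz ^^ t) F0) y \<and>
    agree_on_level m (j + t - 1) (\<lambda>T. (lefschetz ^^ t) F1 T
        + of_nat t * (lefschetz ^^ (t - 1)) F0 T) (\<lambda>T. y (insert (Suc m) T))"
proof -
  obtain F0 where F0: "agree_on_level m (j + t) ((lefschetz ^^ t) F0) y"
    using IH slack by fastforce
  show ?thesis
  proof (cases j)
    case 0
    then have "m < j + t - 1" using slack by simp
    then show ?thesis using F0 by (blast intro: agree_on_level_card_gt)
  next
    case (Suc i)
    obtain F1 where "agree_on_level m (i + t) ((lefschetz ^^ t) F1)
        (\<lambda>T. y (insert (Suc m) T) - of_nat t * (lefschetz ^^ (t - 1)) F0 T)"
      using IH slack Suc by fastforce
    then show ?thesis using F0 Suc by (intro exI[of _ F0] exI[of _ F1])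
        (auto simp: agree_on_level_def)
  qed
qed

lemma lefschetz_pow_surjective_tight:
  fixes y :: "nat set \<Rightarrow> 'a::field_char_0"
  assumes IH: "\<forall>j t (y :: nat set \<Rightarrow> 'a). m \<le> 2*j + t \<longrightarrow>
      (\<exists>f. agree_on_level m (j + t) ((lefschetz ^^ t) f) y)"
    and tight: "Suc m = 2*j + t" and "0 < t"
  shows "\<exists>F0 F1. agree_on_level m (j + t) ((lefschetz ^^ t) F0) y \<and>
    agree_on_level m (j + t - 1) (\<lambda>T. (lefschetz ^^ t) F1 T
        + of_nat t * (lefschetz ^^ (t - 1)) F0 T) (\<lambda>T. y (insert (Suc m) T))"
proof -
  obtain t' where t': "t = Suc t'" using \<open>0 < t\<close> gr0_implies_Suc by blast
  obtain w where w: "agree_on_level m (j + t') ((lefschetz ^^ t') w) (\<lambda>T. y (insert (Suc m) T))"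
    using IH tight t' by fastforce
  obtain h where h: "\<And>i. j = Suc i \<Longrightarrow>
      agree_on_level m (i + Suc t) ((lefschetz ^^ Suc t) h)
          (\<lambda>S. (lefschetz ^^ t) w S - of_nat t * y S)"
  proof (cases j)
    case (Suc i)
    then have "m \<le> 2*i + Suc t" using tight by simp
    then obtain h where "agree_on_level m (i + Suc t) ((lefschetz ^^ Suc t) h)
        (\<lambda>S. (lefschetz ^^ t) w S - of_nat t * y S)"
      using IH by blast
    then show ?thesis using that Suc by blast
  qed (use that in blast)
  \<comment> \<open>Since L^(t+1) h = L^t w - t y, the function F0 solves both halves of the recursion.\<close>
  define c where "c = inverse (of_nat t :: 'a)"
  have ct: "of_nat t * (c * x) = x" "c * (of_nat t * x) = x" for x
    using \<open>0 < t\<close> by (simp_all add: c_def)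
  define F0 where "F0 S = c * (w S - lefschetz h S)" for S
  have F0_pow:
    "(lefschetz ^^ s) F0 S = c * ((lefschetz ^^ s) w S - (lefschetz ^^ s) (lefschetz h) S)" for s S
    by (simp add: F0_def[abs_def] lefschetz_pow_cmult lefschetz_pow_diff)
  have "agree_on_level m (j + t) ((lefschetz ^^ t) F0) y"
  proof (cases j)
    case 0
    then show ?thesis using tight by (simp add: agree_on_level_card_gt)
  next
    case (Suc i)
    show ?thesis unfolding agree_on_level_def
    proof (intro allI impI)
      fix S assume "S \<subseteq> {1..m}" "card S = j + t"
      then have "(lefschetz ^^ t) (lefschetz h) S = (lefschetz ^^ t) w S - of_nat t * y S"
        using h[OF Suc] Suc by (simp add: agree_on_level_def funpow_swap1)
      then show "(lefschetz ^^ t) F0 S = y S" by (simp add: F0_pow ct)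
    qed
  qed
  moreover have "agree_on_level m (j + t - 1)
      (\<lambda>T. (lefschetz ^^ t) h T + of_nat t * (lefschetz ^^ (t - 1)) F0 T) (\<lambda>T. y (insert (Suc m) T))"
    unfolding agree_on_level_def
  proof (intro allI impI)
    fix T assume "T \<subseteq> {1..m}" "card T = j + t - 1"
    then have "(lefschetz ^^ (t - 1)) w T = y (insert (Suc m) T)" using w t'
      by (simp add: agree_on_level_def)
    moreover have "(lefschetz ^^ (t - 1)) (lefschetz h) T = (lefschetz ^^ t) h T" using t'
      by (simp add: funpow_swap1)
    ultimately show "(lefschetz ^^ t) h T + of_nat t * (lefschetz ^^ (t - 1)) F0 T
        = y (insert (Suc m) T)"
      by (simp add: F0_pow right_diff_distrib ct)
  qed
  ultimately show ?thesis by blast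
qed

theorem lefschetz_pow_surjective:
  fixes y :: "nat set \<Rightarrow> 'a::field_char_0"
  assumes "m \<le> 2*j + t"
  shows "\<exists>f. agree_on_level m (j + t) ((lefschetz ^^ t) f) y"
  using assms
proof (induction m arbitrary: j t y)
  case 0
  show ?case
  proof (cases t)
    case 0
    then show ?thesis by (intro exI[of _ y]) (simp add: agree_on_level_def)
  qed (simp add: agree_on_level_card_gt)
next
  case (Suc m)
  show ?case
  proof (cases t)
    case 0
    then show ?thesis by (intro exI[of _ y]) (simp add: agree_on_level_def)
  next
    case (Suc t')
    have IH: "\<forall>j t (y :: nat set \<Rightarrow> 'a). m \<le> 2*j + t \<longrightarrow>
        (\<exists>f. agree_on_level m (j + t) ((lefschetz ^^ t) f) y)"
      using Suc.IH by blast
    define J where "J = j + t - 1"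
    have J: "j + t = Suc J" "j + t - 1 = J" using \<open>t = Suc t'\<close> by (simp_all add: J_def)
    have "\<exists>F0 F1. agree_on_level m (j + t) ((lefschetz ^^ t) F0) y \<and>
      agree_on_level m (j + t - 1) (\<lambda>T. (lefschetz ^^ t) F1 T
          + of_nat t * (lefschetz ^^ (t - 1)) F0 T) (\<lambda>T. y (insert (Suc m) T))"
    proof (cases "Suc m < 2*j + t")
      case True
      then show ?thesis by (rule lefschetz_pow_surjective_slack[OF IH])
    next
      case False
      then have "Suc m = 2*j + t" using Suc.prems by simp
      moreover have "0 < t" using \<open>t = Suc t'\<close> by simp
      ultimately show ?thesis by (rule lefschetz_pow_surjective_tight[OF IH])
    qed
    then show ?thesis unfolding J diff_Suc_1 by (blast intro: agree_on_level_Suc_lefschetz_pow_glue)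
  qed
qed

section \<open>Revlex-leading sets in the image of the squared up operator\<close>

definition revlex_less_set :: "nat set \<Rightarrow> nat set \<Rightarrow> bool" where
  "revlex_less_set T S \<longleftrightarrow> (\<exists>i\<in>T - S. \<forall>j>i. j \<in> T \<longleftrightarrow> j \<in> S)"

lemma not_revlex_less_set_top:
  assumes "T \<subseteq> {1..m}" "Suc m \<in> S"
  shows "\<not> revlex_less_set T S"
proof
  assume "revlex_less_set T S"
  then obtain i where "i \<in> T" "\<forall>j>i. j \<in> T \<longleftrightarrow> j \<in> S"
    unfolding revlex_less_set_def by blast
  moreover have "i < Suc m" "Suc m \<notin> T" using assms(1) \<open>i \<in> T\<close> by auto
  ultimately show False using assms(2) by blast
qed

lemma revlex_less_set_insert_cancel:
  assumes "revlex_less_set (insert a T) (insert a S)" "a \<notin> T" "a \<notin> S"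
  shows "revlex_less_set T S"
proof -
  obtain i where "i \<in> insert a T - insert a S" "\<forall>j>i. j \<in> insert a T \<longleftrightarrow> j \<in> insert a S"
    using assms(1) unfolding revlex_less_set_def by blast
  then have "i \<in> T - S" "\<forall>j>i. j \<in> T \<longleftrightarrow> j \<in> S" using assms(2,3) by auto
  then show ?thesis unfolding revlex_less_set_def by blast
qed

lemma revlex_less_set_of_greater:
  assumes "finite T" "x \<in> T" "\<forall>y\<in>S. y < x"
  shows "revlex_less_set T S"
  unfolding revlex_less_set_def
proof (intro bexI allI impI)
  have "x \<le> Max T" using assms(1,2) by simp
  moreover have "Max T \<in> T" using assms(1,2) Max_in by blast
  ultimately show "Max T \<in> T - S" using assms(3) by force
  fix j assume "Max T < j"
  then have "j \<notin> T" using Max_ge[OF assms(1), of j] by linarith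
  moreover have "j \<notin> S"
  proof
    assume "j \<in> S"
    then have "j < x" using assms(3) by blast
    then show False using \<open>x \<le> Max T\<close> \<open>Max T < j\<close> by linarith
  qed
  ultimately show "j \<in> T \<longleftrightarrow> j \<in> S" by blast
qed

definition crowded_at :: "nat set \<Rightarrow> nat \<Rightarrow> bool" where
  "crowded_at S k \<longleftrightarrow> 2 \<le> k \<and> k \<le> card (S \<inter> {1..2*k-2})"

lemma crowded_at_mono: "crowded_at S k \<Longrightarrow> S \<subseteq> S' \<Longrightarrow> finite S' \<Longrightarrow> crowded_at S' k"
proof -
  assume "crowded_at S k" "S \<subseteq> S'" "finite S'"
  moreover have "card (S \<inter> {1..2*k-2}) \<le> card (S' \<inter> {1..2*k-2})"
    by (rule card_mono) (use calculation in auto)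
  ultimately show ?thesis unfolding crowded_at_def by simp
qed

lemma crowded_at_iff_subset:
  assumes "finite S"
  shows "crowded_at S k \<longleftrightarrow> 2 \<le> k \<and> (\<exists>T\<subseteq>S \<inter> {1..2*k - 2}. card T = k)"
proof
  assume "crowded_at S k"
  then show "2 \<le> k \<and> (\<exists>T\<subseteq>S \<inter> {1..2*k - 2}. card T = k)"
    unfolding crowded_at_def using obtain_subset_with_card_n by metis
next
  assume "2 \<le> k \<and> (\<exists>T\<subseteq>S \<inter> {1..2*k - 2}. card T = k)"
  then show "crowded_at S k"
    unfolding crowded_at_def using card_mono[of "S \<inter> {1..2*k - 2}"] assms by auto
qed

theorem lefschetz_sq_revlex_max_crowded:
  fixes \<phi> :: "nat set \<Rightarrow> 'a::field_char_0"
  assumes "S \<subseteq> {1..m}" "(lefschetz ^^ 2) \<phi> S \<noteq> 0"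
    and "\<And>T. T \<subseteq> {1..m} \<Longrightarrow> card T = card S \<Longrightarrow> T \<noteq> S \<Longrightarrow> (lefschetz ^^ 2) \<phi> T \<noteq> 0 \<Longrightarrow> revlex_less_set T S"
  shows "\<exists>k. crowded_at S k"
  using assms
proof (induction m arbitrary: S \<phi>)
  case 0
  then show ?case by (simp add: lefschetz_pow_card_less)
next
  case (Suc m)
  have finS: "finite S" using Suc.prems(1) finite_subset by blast
  show ?case
  proof (cases "agree_on_level m (card S) ((lefschetz ^^ 2) \<phi>) (\<lambda>_. 0)")
    case False
    then obtain T where T: "T \<subseteq> {1..m}" "card T = card S" "(lefschetz ^^ 2) \<phi> T \<noteq> 0"
      unfolding agree_on_level_def by blast
    have "Suc m \<notin> S"
    proof
      assume "Suc m \<in> S"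
      then have "T \<noteq> S" using T(1) by auto
      then have "revlex_less_set T S" using T by (intro Suc.prems(3)) auto
      then show False using not_revlex_less_set_top[OF T(1) \<open>Suc m \<in> S\<close>] by blast
    qed
    then have "S \<subseteq> {1..m}" using Suc.prems(1) by (auto simp: subset_iff le_Suc_eq)
    then show ?thesis
    proof (rule Suc.IH[OF _ Suc.prems(2)])
      fix T assume "T \<subseteq> {1..m}" "card T = card S" "T \<noteq> S" "(lefschetz ^^ 2) \<phi> T \<noteq> 0"
      then show "revlex_less_set T S" by (intro Suc.prems(3)) auto
    qed
  next
    case True
    define d where "d = card S"
    have "Suc m \<in> S"
    proof (rule ccontr)
      assume "Suc m \<notin> S"
      then have "S \<subseteq> {1..m}" using Suc.prems(1) by (auto simp: subset_iff le_Suc_eq)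
      then show False using True Suc.prems(2) unfolding agree_on_level_def by blast
    qed
    have "2 \<le> d" using lefschetz_pow_card_less[OF finS, of 2 \<phi>] Suc.prems(2) d_def by force
    show ?thesis
    proof (cases "Suc m \<le> 2*d - 2")
      case True
      then have "S \<inter> {1..2*d - 2} = S" using Suc.prems(1) by auto
      then show ?thesis using \<open>2 \<le> d\<close> d_def by (auto simp: crowded_at_def)
    next
      case False
      \<comment> \<open>Then L^2 is injective on the (d-2)-subsets of {1..m}, so phi vanishes there and
        deleting the top element m+1 commutes with L^2 on the (d-1)-subsets.\<close>
      have "2*(d - 2) + 2 \<le> m" using False \<open>2 \<le> d\<close> by linarith
      moreover have "d - 2 + 2 = d" using \<open>2 \<le> d\<close> by simp
      then have "agree_on_level m (d - 2 + 2) ((lefschetz ^^ 2) \<phi>) (\<lambda>_. 0)"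
        unfolding d_def using True by simp
      ultimately have "agree_on_level m (d - 2) \<phi> (\<lambda>_. 0)" by (rule lefschetz_pow_injective)
      then have \<phi>0: "agree_on_level m (d - 1) (lefschetz \<phi>) (\<lambda>_. 0)"
        using agree_on_level_lefschetz_pow[of m "d - 2" \<phi> "\<lambda>_. 0" 1] \<open>2 \<le> d\<close>
        by (simp add: numeral_2_eq_2 Suc_diff_Suc)
      define \<phi>1 where "\<phi>1 T = \<phi> (insert (Suc m) T)" for T
      define S' where "S' = S - {Suc m}"
      have S': "S = insert (Suc m) S'" "Suc m \<notin> S'" "S' \<subseteq> {1..m}" "card S' = d - 1"
        using \<open>Suc m \<in> S\<close> Suc.prems(1) by (auto simp: S'_def d_def le_Suc_eq subset_iff)
      have lifted: "(lefschetz ^^ 2) \<phi> (insert (Suc m) T) = (lefschetz ^^ 2) \<phi>1 T"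
        if T: "T \<subseteq> {1..m}" "card T = d - 1" for T
      proof -
        have "finite T" "Suc m \<notin> T" using T(1) finite_subset by auto
        moreover have "lefschetz \<phi> T = 0" using \<phi>0 T unfolding agree_on_level_def by blast
        ultimately show ?thesis using lefschetz_pow_insert[of T "Suc m" 2 \<phi>]
          by (simp add: \<phi>1_def[abs_def])
      qed
      have "\<exists>k. crowded_at S' k"
      proof (rule Suc.IH)
        show "S' \<subseteq> {1..m}" by (fact S'(3))
        show "(lefschetz ^^ 2) \<phi>1 S' \<noteq> 0" using lifted[OF S'(3,4)] S'(1) Suc.prems(2) by simp
        fix T assume T: "T \<subseteq> {1..m}" "card T = card S'" "T \<noteq> S'" "(lefschetz ^^ 2) \<phi>1 T \<noteq> 0"
        have "finite T" "Suc m \<notin> T" using T(1) finite_subset by auto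
        have "revlex_less_set (insert (Suc m) T) S"
        proof (rule Suc.prems(3))
          show "insert (Suc m) T \<subseteq> {1..Suc m}" using T(1) by auto
          show "card (insert (Suc m) T) = card S"
            using T(2) S'(1,2) \<open>finite T\<close> \<open>Suc m \<notin> T\<close> finS by (simp add: card_insert_if)
          show "insert (Suc m) T \<noteq> S"
            using T(3) S'(1,2) \<open>Suc m \<notin> T\<close> by (simp add: insert_ident)
          show "(lefschetz ^^ 2) \<phi> (insert (Suc m) T) \<noteq> 0"
            using lifted[OF T(1)] T(2,4) S'(4) by simp
        qed
        then have "revlex_less_set (insert (Suc m) T) (insert (Suc m) S')" by (simp only: S'(1))
        then show "revlex_less_set T S'"
          using \<open>Suc m \<notin> T\<close> S'(2) by (rule revlex_less_set_insert_cancel)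
      qed
      then show ?thesis using S'(1) finS crowded_at_mono by blast
    qed
  qed
qed

section \<open>The graded reverse lexicographic order\<close>

lemma finite_lookup_diff: "finite {j. Poly_Mapping.lookup a j \<noteq> Poly_Mapping.lookup (b::monom) j}"
  by (rule finite_subset[of _ "Poly_Mapping.keys a \<union> Poly_Mapping.keys b"]) (auto simp: in_keys_iff)

lemma drl_less_iff:
  "drl_less a b \<longleftrightarrow> tdeg a < tdeg b \<or> (tdeg a = tdeg b \<and>
     (\<exists>i. Poly_Mapping.lookup a i > Poly_Mapping.lookup b i \<and>
         (\<forall>k>i. Poly_Mapping.lookup a k = Poly_Mapping.lookup b k)))"
proof -
  define D where "D = {j. Poly_Mapping.lookup a j \<noteq> Poly_Mapping.lookup b j}"
  have fin: "finite D" unfolding D_def by (rule finite_lookup_diff)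
  have D_empty: "D = {} \<longleftrightarrow> a = b"
    unfolding D_def using poly_mapping_eqI by auto
  have above_Max: "\<forall>k>Max D. Poly_Mapping.lookup a k = Poly_Mapping.lookup b k"
    using Max_ge[OF fin] unfolding D_def by (metis (mono_tags) leD mem_Collect_eq)
  have Max_eq: "Max D = i"
    if "Poly_Mapping.lookup a i \<noteq> Poly_Mapping.lookup b i"
      "\<forall>k>i. Poly_Mapping.lookup a k = Poly_Mapping.lookup b k" for i
    by (rule Max_eqI[OF fin]) (use that in \<open>auto simp: D_def intro: leI\<close>)
  show ?thesis
    unfolding drl_less_def D_def[symmetric] Let_def
    using D_empty above_Max Max_eq by (metis less_irrefl)
qed

lemma drl_less_asym: "drl_less a b \<Longrightarrow> \<not> drl_less b a"
  unfolding drl_less_iff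
  by (metis less_asym less_imp_not_less linorder_neqE_nat not_less_iff_gr_or_eq)

lemma drl_less_trans:
  assumes "drl_less a b" "drl_less b c"
  shows "drl_less a c"
proof (cases "tdeg a < tdeg c")
  case False
  then have "tdeg a = tdeg b" "tdeg b = tdeg c" using assms unfolding drl_less_iff by auto
  moreover obtain i where i: "Poly_Mapping.lookup a i > Poly_Mapping.lookup b i"
      "\<forall>k>i. Poly_Mapping.lookup a k = Poly_Mapping.lookup b k"
    using assms(1) calculation unfolding drl_less_iff by auto
  moreover obtain j where j: "Poly_Mapping.lookup b j > Poly_Mapping.lookup c j"
      "\<forall>k>j. Poly_Mapping.lookup b k = Poly_Mapping.lookup c k"
    using assms(2) calculation unfolding drl_less_iff by auto
  moreover have "Poly_Mapping.lookup a (max i j) > Poly_Mapping.lookup c (max i j)"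
    "\<forall>k>max i j. Poly_Mapping.lookup a k = Poly_Mapping.lookup c k"
    using i j by (cases i j rule: linorder_cases; force simp: max_def)+
  ultimately show ?thesis unfolding drl_less_iff by auto
qed (simp add: drl_less_iff)

lemma drl_less_linear:
  assumes "a \<noteq> b"
  shows "drl_less a b \<or> drl_less b a"
proof (cases "tdeg a = tdeg b")
  case True
  define D where "D = {j. Poly_Mapping.lookup a j \<noteq> Poly_Mapping.lookup b j}"
  have fin: "finite D" unfolding D_def by (rule finite_lookup_diff)
  have "D \<noteq> {}" unfolding D_def using assms by (metis (mono_tags) Collect_empty_eq poly_mapping_eqI)
  then have "Poly_Mapping.lookup a (Max D) \<noteq> Poly_Mapping.lookup b (Max D)"
    using fin Max_in unfolding D_def by blast
  moreover have "\<forall>k>Max D. Poly_Mapping.lookup a k = Poly_Mapping.lookup b k"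
    using Max_ge[OF fin] unfolding D_def by (metis (mono_tags) leD mem_Collect_eq)
  ultimately show ?thesis
    using True unfolding drl_less_iff
    by (cases "Poly_Mapping.lookup a (Max D) < Poly_Mapping.lookup b (Max D)")
        (auto intro!: exI[of _ "Max D"])
qed (auto simp: drl_less_def)

lemma finite_has_drl_max:
  "finite K \<Longrightarrow> K \<noteq> {} \<Longrightarrow> \<exists>m\<in>K. \<forall>m'\<in>K. m' \<noteq> m \<longrightarrow> drl_less m' m"
proof (induction K rule: finite_ne_induct)
  case (insert x K)
  then obtain m where m: "m \<in> K" "\<forall>m'\<in>K. m' \<noteq> m \<longrightarrow> drl_less m' m" by blast
  show ?case
  proof (cases "drl_less m x")
    case True
    show ?thesis
    proof (intro bexI[of _ x] ballI impI)
      fix m' assume "m' \<in> insert x K" "m' \<noteq> x"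
      then have "m' \<in> K" by simp
      then show "drl_less m' x" using m True drl_less_trans by (cases "m' = m") blast+
    qed simp
  next
    case False
    then have "drl_less x m" if "x \<noteq> m" using drl_less_linear that by blast
    then show ?thesis using m by (intro bexI[of _ m]) auto
  qed
qed simp

lemma lead_monom_eqI:
  assumes "m \<in> Poly_Mapping.keys p" "\<forall>m'\<in>Poly_Mapping.keys p. m' \<noteq> m \<longrightarrow> drl_less m' m"
  shows "lead_monom p = m"
  unfolding lead_monom_def
proof (rule the_equality)
  fix m' assume m': "m' \<in> Poly_Mapping.keys p \<and> (\<forall>m''\<in>Poly_Mapping.keys p. m'' \<noteq> m'
      \<longrightarrow> drl_less m'' m')"
  show "m' = m"
  proof (rule ccontr)
    assume "m' \<noteq> m"
    then have "drl_less m' m" "drl_less m m'" using assms m' by auto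
    then show False using drl_less_asym by blast
  qed
qed (use assms in blast)

lemma lead_monom_max:
  assumes "p \<noteq> 0"
  shows "lead_monom p \<in> Poly_Mapping.keys p"
    and "m \<in> Poly_Mapping.keys p \<Longrightarrow> m \<noteq> lead_monom p \<Longrightarrow> drl_less m (lead_monom p)"
proof -
  obtain m where "m \<in> Poly_Mapping.keys p" "\<forall>m'\<in>Poly_Mapping.keys p. m' \<noteq> m \<longrightarrow> drl_less m' m"
    using finite_has_drl_max[of "Poly_Mapping.keys p"] assms by auto
  moreover from this have "lead_monom p = m" by (rule lead_monom_eqI)
  ultimately show "lead_monom p \<in> Poly_Mapping.keys p"
    and "m \<in> Poly_Mapping.keys p \<Longrightarrow> m \<noteq> lead_monom p \<Longrightarrow> drl_less m (lead_monom p)" for m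
    by auto
qed

section \<open>Square-free monomials and polynomials\<close>

definition monom_of_set :: "nat set \<Rightarrow> monom" where
  "monom_of_set T = (\<Sum>i\<in>T. Poly_Mapping.single i 1)"

lemma lookup_monom_of_set: "finite T \<Longrightarrow> Poly_Mapping.lookup (monom_of_set T) i
    = (if i \<in> T then 1 else 0)"
  by (simp add: monom_of_set_def lookup_sum lookup_single when_def)

lemma keys_monom_of_set: "finite T \<Longrightarrow> Poly_Mapping.keys (monom_of_set T) = T"
  by (auto simp: in_keys_iff lookup_monom_of_set split: if_splits)

lemma monom_of_set_insert:
  "finite T \<Longrightarrow> i \<notin> T \<Longrightarrow> monom_of_set (insert i T) = Poly_Mapping.single i 1 + monom_of_set T"
  by (simp add: monom_of_set_def)

lemma tdeg_monom_of_set: "finite T \<Longrightarrow> tdeg (monom_of_set T) = card T"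
  by (simp add: tdeg_def keys_monom_of_set lookup_monom_of_set)

lemma mdvd_monom_of_set_iff:
  "finite T \<Longrightarrow> finite S \<Longrightarrow> mdvd (monom_of_set T) (monom_of_set S) \<longleftrightarrow> T \<subseteq> S"
  by (auto simp: mdvd_def lookup_monom_of_set split: if_splits)

lemma drl_less_monom_of_set_iff:
  assumes "finite T" "finite S" "card T = card S"
  shows "drl_less (monom_of_set T) (monom_of_set S) \<longleftrightarrow> revlex_less_set T S"
  using assms unfolding drl_less_iff revlex_less_set_def
  by (auto simp: tdeg_monom_of_set lookup_monom_of_set split: if_splits)

definition sqfree :: "monom \<Rightarrow> bool" where
  "sqfree m \<longleftrightarrow> (\<forall>i. Poly_Mapping.lookup m i \<le> 1)"

lemma sqfree_monom_of_set: "finite T \<Longrightarrow> sqfree (monom_of_set T)"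
  by (simp add: sqfree_def lookup_monom_of_set)

lemma sqfree_eq_monom_of_set: "sqfree m \<Longrightarrow> m = monom_of_set (Poly_Mapping.keys m)"
proof (rule poly_mapping_eqI)
  fix i assume "sqfree m"
  then have "Poly_Mapping.lookup m i \<le> 1" by (simp add: sqfree_def)
  then show "Poly_Mapping.lookup m i = Poly_Mapping.lookup (monom_of_set (Poly_Mapping.keys m)) i"
    by (auto simp: lookup_monom_of_set in_keys_iff)
qed

lemma monom_of_set_eq_iff: "finite T \<Longrightarrow> monom_of_set T = m \<longleftrightarrow> sqfree m \<and> Poly_Mapping.keys m = T"
  using sqfree_monom_of_set keys_monom_of_set sqfree_eq_monom_of_set by metis

lemma tdeg_sqfree: "sqfree m \<Longrightarrow> tdeg m = card (Poly_Mapping.keys m)"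
  using tdeg_monom_of_set[of "Poly_Mapping.keys m"] sqfree_eq_monom_of_set[of m] by simp

lemma not_sqfree_add: "\<not> sqfree b \<Longrightarrow> \<not> sqfree (a + b)"
  unfolding sqfree_def lookup_add by (meson le_add2 order_trans)

lemma mdvd_square_iff: "mdvd (Poly_Mapping.single i 2) m \<longleftrightarrow> 2 \<le> Poly_Mapping.lookup m i"
  unfolding mdvd_def
proof
  assume "\<forall>j. Poly_Mapping.lookup (Poly_Mapping.single i 2) j \<le> Poly_Mapping.lookup m j"
  then show "2 \<le> Poly_Mapping.lookup m i" by (metis lookup_single_eq)
qed (simp add: lookup_single when_def)

lemma not_sqfree_iff_mdvd_square: "\<not> sqfree m \<longleftrightarrow> (\<exists>i. mdvd (Poly_Mapping.single i 2) m)"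
  unfolding sqfree_def mdvd_square_iff by (metis Suc_1 not_less_eq_eq)

definition sqfree_part :: "'a::comm_ring_1 mpoly \<Rightarrow> 'a mpoly" where
  "sqfree_part p = Abs_poly_mapping (\<lambda>m. if sqfree m then Poly_Mapping.lookup p m else 0)"

lemma lookup_sqfree_part:
  "Poly_Mapping.lookup (sqfree_part p) m = (if sqfree m then Poly_Mapping.lookup p m else 0)"
proof -
  have "finite {m. (if sqfree m then Poly_Mapping.lookup p m else 0) \<noteq> 0}"
    by (rule finite_subset[of _ "Poly_Mapping.keys p"]) (auto simp: in_keys_iff)
  then show ?thesis unfolding sqfree_part_def by simp
qed

lemma sqfree_part_add: "sqfree_part (p + q) = sqfree_part p + sqfree_part q"
  by (rule poly_mapping_eqI) (simp add: lookup_sqfree_part lookup_add)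

lemma sqfree_part_sum: "sqfree_part (\<Sum>x\<in>A. f x) = (\<Sum>x\<in>A. sqfree_part (f x))"
  by (rule poly_mapping_eqI) (simp add: lookup_sqfree_part lookup_sum)

lemma sqfree_part_mult_eq_0:
  assumes "\<forall>m\<in>Poly_Mapping.keys b. \<not> sqfree m"
  shows "sqfree_part (a * b) = 0"
proof (rule poly_mapping_eqI)
  fix k
  have "\<not> sqfree k" if "k \<in> Poly_Mapping.keys (a * b)"
    using that keys_mult[of a b] assms not_sqfree_add by blast
  then show "Poly_Mapping.lookup (sqfree_part (a * b)) k = Poly_Mapping.lookup 0 k"
    by (auto simp: lookup_sqfree_part in_keys_iff)
qed

lemma sqfree_part_mult_right: "sqfree_part (a * b) = sqfree_part (a * sqfree_part b)"
proof -
  have "sqfree_part (a * (b - sqfree_part b)) = 0"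
    by (rule sqfree_part_mult_eq_0) (auto simp: in_keys_iff lookup_minus lookup_sqfree_part)
  moreover have "a * b = a * sqfree_part b + a * (b - sqfree_part b)" by (simp add: algebra_simps)
  ultimately show ?thesis by (simp add: sqfree_part_add)
qed

definition poly_of_setfun :: "nat \<Rightarrow> (nat set \<Rightarrow> 'a::comm_ring_1) \<Rightarrow> 'a mpoly" where
  "poly_of_setfun n \<phi> = (\<Sum>T\<in>Pow {1..n}. Poly_Mapping.single (monom_of_set T) (\<phi> T))"

lemma lookup_poly_of_setfun: "Poly_Mapping.lookup (poly_of_setfun n \<phi>) m =
    (if sqfree m \<and> Poly_Mapping.keys m \<subseteq> {1..n} then \<phi> (Poly_Mapping.keys m) else 0)"
proof -
  have "monom_of_set T = m \<longleftrightarrow> T = Poly_Mapping.keys m \<and> sqfree m" if "T \<in> Pow {1..n}" for T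
    using that monom_of_set_eq_iff[of T m] finite_subset[of T "{1..n}"] by auto
  then have "Poly_Mapping.lookup (poly_of_setfun n \<phi>) m =
      (\<Sum>T\<in>Pow {1..n}. if T = Poly_Mapping.keys m \<and> sqfree m then \<phi> T else 0)"
    unfolding poly_of_setfun_def lookup_sum
      by (intro sum.cong refl) (simp add: lookup_single when_def)
  then show ?thesis by (cases "sqfree m") (simp_all add: sum.delta')
qed

lemma lookup_poly_of_setfun_monom_of_set:
  "T \<subseteq> {1..n} \<Longrightarrow> Poly_Mapping.lookup (poly_of_setfun n \<phi>) (monom_of_set T) = \<phi> T"
  using finite_subset[of T "{1..n}"]
  by (simp add: lookup_poly_of_setfun sqfree_monom_of_set keys_monom_of_set)

lemma poly_of_setfun_zero [simp]: "poly_of_setfun n (\<lambda>_. 0) = 0"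
  by (rule poly_mapping_eqI) (simp add: lookup_poly_of_setfun)

lemma poly_of_setfun_cong: "(\<And>S. S \<subseteq> {1..n} \<Longrightarrow> \<phi> S = \<psi> S) \<Longrightarrow> poly_of_setfun n \<phi> = poly_of_setfun n \<psi>"
  by (rule poly_mapping_eqI) (simp add: lookup_poly_of_setfun)

lemma poly_of_setfun_sum: "(\<Sum>i\<in>I. poly_of_setfun n (f i)) = poly_of_setfun n (\<lambda>S. \<Sum>i\<in>I. f i S)"
proof (rule poly_mapping_eqI)
  fix m
  show "Poly_Mapping.lookup (\<Sum>i\<in>I. poly_of_setfun n (f i)) m =
      Poly_Mapping.lookup (poly_of_setfun n (\<lambda>S. \<Sum>i\<in>I. f i S)) m"
  proof (cases "sqfree m \<and> Poly_Mapping.keys m \<subseteq> {1..n}")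
    case True
    then show ?thesis by (simp add: lookup_poly_of_setfun lookup_sum)
  next
    case False
    then have "Poly_Mapping.lookup (poly_of_setfun n g) m = 0" for g :: "nat set \<Rightarrow> 'a"
      unfolding lookup_poly_of_setfun by (rule if_not_P)
    then show ?thesis by (simp add: lookup_sum)
  qed
qed

lemma Pring_poly_of_setfun: "poly_of_setfun n \<phi> \<in> Pring n"
  unfolding Pring_def
proof (intro CollectI ballI)
  fix m assume "m \<in> Poly_Mapping.keys (poly_of_setfun n \<phi>)"
  then show "Poly_Mapping.keys m \<subseteq> {1..n}"
    by (simp add: in_keys_iff lookup_poly_of_setfun split: if_splits)
qed

lemma sqfree_part_Pring:
  assumes "p \<in> Pring n"
  shows "sqfree_part p = poly_of_setfun n (\<lambda>S. Poly_Mapping.lookup p (monom_of_set S))"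
proof (rule poly_mapping_eqI)
  fix m
  have "Poly_Mapping.lookup p m = 0" if "\<not> Poly_Mapping.keys m \<subseteq> {1..n}"
    using that assms unfolding Pring_def by (auto simp: in_keys_iff)
  then show "Poly_Mapping.lookup (sqfree_part p) m =
      Poly_Mapping.lookup (poly_of_setfun n (\<lambda>S. Poly_Mapping.lookup p (monom_of_set S))) m"
    by (auto simp: lookup_poly_of_setfun lookup_sqfree_part dest: sqfree_eq_monom_of_set)
qed

definition lin :: "nat \<Rightarrow> 'a::comm_ring_1 mpoly" where
  "lin n = (\<Sum>i=1..n. var i)"

lemma single_add_monom_of_set_eq_iff:
  assumes "finite T" "sqfree m"
  shows "Poly_Mapping.single i 1 + monom_of_set T = m \<longleftrightarrow>
    i \<in> Poly_Mapping.keys m \<and> T = Poly_Mapping.keys m - {i}"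
proof
  assume m: "Poly_Mapping.single i 1 + monom_of_set T = m"
  have "Poly_Mapping.lookup m i \<le> 1" using assms(2) by (simp add: sqfree_def)
  then have "i \<notin> T" using m assms(1) by (auto simp: lookup_add lookup_monom_of_set)
  then have "m = monom_of_set (insert i T)" using m assms(1) by (simp add: monom_of_set_insert)
  then have "Poly_Mapping.keys m = insert i T" using assms(1) by (simp add: keys_monom_of_set)
  then show "i \<in> Poly_Mapping.keys m \<and> T = Poly_Mapping.keys m - {i}" using \<open>i \<notin> T\<close> by auto
next
  assume "i \<in> Poly_Mapping.keys m \<and> T = Poly_Mapping.keys m - {i}"
  then have "Poly_Mapping.keys m = insert i T" "i \<notin> T" by auto
  then show "Poly_Mapping.single i 1 + monom_of_set T = m"
    using sqfree_eq_monom_of_set[OF assms(2)] assms(1) by (simp add: monom_of_set_insert)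
qed

lemma sqfree_part_var_mult:
  assumes "i \<in> {1..n}"
  shows "sqfree_part (var i * poly_of_setfun n \<phi>)
      = poly_of_setfun n (\<lambda>S. if i \<in> S then \<phi> (S - {i}) else 0)"
proof (rule poly_mapping_eqI)
  fix m
  have prod: "var i * poly_of_setfun n \<phi> =
      (\<Sum>T\<in>Pow {1..n}. Poly_Mapping.single (Poly_Mapping.single i 1 + monom_of_set T) (\<phi> T))"
    by (simp add: poly_of_setfun_def sum_distrib_left var_def mon_def mult_single)
  show "Poly_Mapping.lookup (sqfree_part (var i * poly_of_setfun n \<phi>)) m =
      Poly_Mapping.lookup (poly_of_setfun n (\<lambda>S. if i \<in> S then \<phi> (S - {i}) else 0)) m"
  proof (cases "sqfree m")
    case True
    have "Poly_Mapping.lookup (sqfree_part (var i * poly_of_setfun n \<phi>)) m =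
        (\<Sum>T\<in>Pow {1..n}. if Poly_Mapping.single i 1 + monom_of_set T = m then \<phi> T else 0)"
      using True by (simp add: prod lookup_sqfree_part lookup_sum lookup_single when_def)
    also have "\<dots> = (\<Sum>T\<in>Pow {1..n}. if T = Poly_Mapping.keys m - {i} then
           (if i \<in> Poly_Mapping.keys m then \<phi> T else 0) else 0)"
    proof (rule sum.cong[OF refl])
      fix T assume "T \<in> Pow {1..n}"
      then have "finite T" using finite_subset by blast
      then show "(if Poly_Mapping.single i 1 + monom_of_set T = m then \<phi> T else 0) =
          (if T = Poly_Mapping.keys m - {i} then
             (if i \<in> Poly_Mapping.keys m then \<phi> T else 0) else 0)"
        using single_add_monom_of_set_eq_iff[OF _ True, of T i] by auto
    qed
    also have "\<dots> = Poly_Mapping.lookup (poly_of_setfun n (\<lambda>S. if i \<in> S then \<phi> (S - {i}) else 0)) m"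
      using True assms by (auto simp: sum.delta' lookup_poly_of_setfun)
    finally show ?thesis .
  qed (simp add: lookup_sqfree_part lookup_poly_of_setfun)
qed

lemma sqfree_part_lin_mult: "sqfree_part (lin n * poly_of_setfun n \<phi>)
    = poly_of_setfun n (lefschetz \<phi>)"
proof -
  have "sqfree_part (lin n * poly_of_setfun n \<phi>)
      = (\<Sum>i=1..n. sqfree_part (var i * poly_of_setfun n \<phi>))"
    by (simp add: lin_def sum_distrib_right sqfree_part_sum)
  also have "\<dots> = poly_of_setfun n (\<lambda>S. \<Sum>i=1..n. if i \<in> S then \<phi> (S - {i}) else 0)"
    by (simp add: sqfree_part_var_mult poly_of_setfun_sum)
  also have "\<dots> = poly_of_setfun n (lefschetz \<phi>)"
  proof (rule poly_of_setfun_cong)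
    fix S assume "S \<subseteq> {1..n}"
    then show "(\<Sum>i=1..n. if i \<in> S then \<phi> (S - {i}) else 0) = lefschetz \<phi> S"
      by (simp add: lefschetz_def sum.inter_restrict[symmetric] Int_absorb1)
  qed
  finally show ?thesis .
qed

lemma sqfree_part_lin_sq_mult:
  "sqfree_part (lin n ^ 2 * poly_of_setfun n \<phi>) = poly_of_setfun n ((lefschetz ^^ 2) \<phi>)"
proof -
  have "sqfree_part (lin n ^ 2 * poly_of_setfun n \<phi>)
      = sqfree_part (lin n * sqfree_part (lin n * poly_of_setfun n \<phi>))"
    by (simp add: power2_eq_square mult.assoc sqfree_part_mult_right[symmetric])
  then show ?thesis by (simp add: sqfree_part_lin_mult numeral_2_eq_2)
qed

section \<open>The sets D k\<close>

lemma mdvd_keys: "mdvd a b \<Longrightarrow> Poly_Mapping.keys a \<subseteq> Poly_Mapping.keys b"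
  unfolding mdvd_def by (auto simp: in_keys_iff) (metis less_le_trans)

lemma sqfree_monoms_eq: "sqfree_monoms k r = monom_of_set ` {T. T \<subseteq> {1..r} \<and> card T = k}"
proof -
  have "m \<in> sqfree_monoms k r \<longleftrightarrow> (\<exists>T. m = monom_of_set T \<and> T \<subseteq> {1..r} \<and> card T = k)" for m
  proof
    assume "m \<in> sqfree_monoms k r"
    then have "sqfree m" "Poly_Mapping.keys m \<subseteq> {1..r}" "tdeg m = k"
      unfolding sqfree_monoms_def sqfree_def by auto
    moreover from this have "m = monom_of_set (Poly_Mapping.keys m)" "card (Poly_Mapping.keys m)
        = k"
      using sqfree_eq_monom_of_set tdeg_sqfree by simp_all
    ultimately show "\<exists>T. m = monom_of_set T \<and> T \<subseteq> {1..r} \<and> card T = k"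
      by (intro exI[of _ "Poly_Mapping.keys m"] conjI)
  next
    assume "\<exists>T. m = monom_of_set T \<and> T \<subseteq> {1..r} \<and> card T = k"
    then obtain T where "m = monom_of_set T" "T \<subseteq> {1..r}" "card T = k" by blast
    moreover have "finite T" using calculation(2) finite_subset by blast
    ultimately show "m \<in> sqfree_monoms k r"
      using sqfree_monom_of_set unfolding sqfree_monoms_def sqfree_def
      by (simp add: keys_monom_of_set tdeg_monom_of_set)
  qed
  then show ?thesis by blast
qed

lemma D_eq:
  "D k = monom_of_set ` {T. T \<subseteq> {1..2*k - 2} \<and> card T = k \<and> (\<forall>k'<k. \<not> crowded_at T k')}"
proof -
  have divisor_iff: "(\<exists>m'\<in>sqfree_monoms k' (2*k' - 2). mdvd m' (monom_of_set T)) \<longleftrightarrow>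
      (\<exists>T'\<subseteq>T \<inter> {1..2*k' - 2}. card T' = k')" if "finite T" for T k'
  proof
    assume "\<exists>m'\<in>sqfree_monoms k' (2*k' - 2). mdvd m' (monom_of_set T)"
    then obtain T' where T': "T' \<subseteq> {1..2*k' - 2}" "card T' = k'" "mdvd (monom_of_set T')
        (monom_of_set T)"
      unfolding sqfree_monoms_eq by blast
    moreover have "finite T'" using T'(1) finite_subset by blast
    ultimately show "\<exists>T'\<subseteq>T \<inter> {1..2*k' - 2}. card T' = k'"
      using that by (auto simp: mdvd_monom_of_set_iff)
  next
    assume "\<exists>T'\<subseteq>T \<inter> {1..2*k' - 2}. card T' = k'"
    then obtain T' where T': "T' \<subseteq> T \<inter> {1..2*k' - 2}" "card T' = k'" by blast
    then have "monom_of_set T' \<in> sqfree_monoms k' (2*k' - 2)" unfolding sqfree_monoms_eq by blast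
    moreover have "mdvd (monom_of_set T') (monom_of_set T)"
      using T'(1) that finite_subset[of T' T] by (simp add: mdvd_monom_of_set_iff)
    ultimately show "\<exists>m'\<in>sqfree_monoms k' (2*k' - 2). mdvd m' (monom_of_set T)" by blast
  qed
  have in_D_iff: "monom_of_set T \<in> D k \<longleftrightarrow> (\<forall>k'<k. \<not> crowded_at T k')"
    if "T \<subseteq> {1..2*k - 2}" "card T = k" for T
  proof -
    have fin: "finite T" using that(1) finite_subset by blast
    have "monom_of_set T \<in> sqfree_monoms k (2*k - 2)" unfolding sqfree_monoms_eq using that by blast
    then have "monom_of_set T \<in> D k \<longleftrightarrow>
        \<not> (\<exists>k'. 2 \<le> k' \<and> k' < k \<and> (\<exists>m'\<in>sqfree_monoms k' (2*k' - 2). mdvd m' (monom_of_set T)))"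
      unfolding D_def by blast
    also have "\<dots> \<longleftrightarrow> (\<forall>k'<k. \<not> crowded_at T k')"
      unfolding divisor_iff[OF fin] crowded_at_iff_subset[OF fin] by blast
    finally show ?thesis .
  qed
  show ?thesis
  proof (rule set_eqI)
    fix m
    show "m \<in> D k \<longleftrightarrow> m \<in> monom_of_set ` {T. T \<subseteq> {1..2*k - 2} \<and> card T = k
        \<and> (\<forall>k'<k. \<not> crowded_at T k')}"
    proof
      assume "m \<in> D k"
      moreover from this obtain T where "m = monom_of_set T" "T \<subseteq> {1..2*k - 2}" "card T = k"
        unfolding D_def sqfree_monoms_eq by blast
      ultimately show "m \<in> monom_of_set ` {T. T \<subseteq> {1..2*k - 2} \<and> card T = k
          \<and> (\<forall>k'<k. \<not> crowded_at T k')}"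
        using in_D_iff by blast
    qed (use in_D_iff in blast)
  qed
qed

lemma least_crowded_index_bound:
  assumes "S \<subseteq> {1..n}" "crowded_at S k" "\<forall>k'<k. \<not> crowded_at S k'"
  shows "2*k - 2 \<le> n"
proof (rule ccontr)
  assume "\<not> 2*k - 2 \<le> n"
  have "finite S" using assms(1) finite_subset by blast
  have "card (S \<inter> {1..2*k - 2}) < k"
  proof (cases "k = 2")
    case True
    then have "S \<inter> {1..2*k - 2} \<subseteq> {1}" using assms(1) \<open>\<not> 2*k - 2 \<le> n\<close> by auto
    then have "card (S \<inter> {1..2*k - 2}) \<le> 1" using card_mono[of "{1::nat}"] by fastforce
    then show ?thesis using True by simp
  next
    case False
    then have "3 \<le> k" "card (S \<inter> {1..2*(k - 1) - 2}) < k - 1"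
      using assms(2,3) unfolding crowded_at_def by (auto dest: spec[of _ "k - 1"])
    have "S \<inter> {1..2*k - 2} \<subseteq> insert (2*k - 3) (S \<inter> {1..2*(k - 1) - 2})"
      using assms(1) \<open>\<not> 2*k - 2 \<le> n\<close> by auto
    then have "card (S \<inter> {1..2*k - 2}) \<le> card (insert (2*k - 3) (S \<inter> {1..2*(k - 1) - 2}))"
      by (rule card_mono[rotated]) (simp add: \<open>finite S\<close>)
    also have "\<dots> \<le> Suc (card (S \<inter> {1..2*(k - 1) - 2}))"
      by (simp add: card_insert_if \<open>finite S\<close>)
    finally show ?thesis using \<open>card (S \<inter> {1..2*(k - 1) - 2}) < k - 1\<close> by linarith
  qed
  then show False using assms(2) unfolding crowded_at_def by simp
qed

lemma crowded_has_D_divisor: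
  assumes "S \<subseteq> {1..n}" "crowded_at S k"
  shows "\<exists>k'. 2 \<le> k' \<and> 2*k' - 2 \<le> n \<and> (\<exists>m\<in>D k'. mdvd m (monom_of_set S))"
proof -
  define k0 where "k0 = (LEAST k. crowded_at S k)"
  have k0: "crowded_at S k0" unfolding k0_def using assms(2) by (rule LeastI)
  have below: "\<forall>k'<k0. \<not> crowded_at S k'" unfolding k0_def using not_less_Least by blast
  have "finite S" using assms(1) finite_subset by blast
  then obtain T where T: "T \<subseteq> S \<inter> {1..2*k0 - 2}" "card T = k0" "2 \<le> k0"
    using k0 crowded_at_iff_subset by blast
  have "finite T" using T(1) \<open>finite S\<close> finite_subset by blast
  have "\<not> crowded_at T k'" if "k' < k0" for k'
    using crowded_at_mono[of T k' S] T(1) \<open>finite S\<close> below that by blast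
  then have "monom_of_set T \<in> D k0" unfolding D_eq using T by blast
  moreover have "mdvd (monom_of_set T) (monom_of_set S)"
    using T(1) \<open>finite T\<close> \<open>finite S\<close> by (simp add: mdvd_monom_of_set_iff)
  ultimately show ?thesis
    using least_crowded_index_bound[OF assms(1) k0 below] T(3) by blast
qed

section \<open>Ideals of P_n\<close>

lemma Pring_zero: "0 \<in> Pring n"
  by (simp add: Pring_def)

lemma Pring_one: "(1::'a::comm_ring_1 mpoly) \<in> Pring n"
  by (simp add: Pring_def)

lemma Pring_add: "p \<in> Pring n \<Longrightarrow> q \<in> Pring n \<Longrightarrow> p + q \<in> Pring n"
  unfolding Pring_def using keys_add[of p q] by (auto dest!: subsetD)

lemma Pring_uminus: "p \<in> Pring n \<Longrightarrow> - (p::'a::comm_ring_1 mpoly) \<in> Pring n"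
  unfolding Pring_def by (simp add: in_keys_iff)

lemma Pring_diff: "p \<in> Pring n \<Longrightarrow> q \<in> Pring n \<Longrightarrow> (p::'a::comm_ring_1 mpoly) - q \<in> Pring n"
  using Pring_add[of p n "- q"] Pring_uminus[of q n] by simp

lemma Pring_mult:
  assumes "p \<in> Pring n" "q \<in> Pring n"
  shows "(p::'a::comm_ring_1 mpoly) * q \<in> Pring n"
  unfolding Pring_def
proof (intro CollectI ballI)
  fix k assume "k \<in> Poly_Mapping.keys (p * q)"
  then obtain a b where "k = a + b" "a \<in> Poly_Mapping.keys p" "b \<in> Poly_Mapping.keys q"
    using keys_mult by blast
  then show "Poly_Mapping.keys k \<subseteq> {1..n}"
    using assms keys_add[of a b] unfolding Pring_def by blast
qed

lemma Pring_sum: "(\<And>x. x \<in> A \<Longrightarrow> f x \<in> Pring n) \<Longrightarrow> sum f A \<in> Pring n"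
  by (induction A rule: infinite_finite_induct) (simp_all add: Pring_zero Pring_add)

lemma Pring_single: "Poly_Mapping.keys m \<subseteq> {1..n} \<Longrightarrow> Poly_Mapping.single m c \<in> Pring n"
  by (simp add: Pring_def)

lemma Pring_var: "i \<in> {1..n} \<Longrightarrow> (var i :: 'a::comm_ring_1 mpoly) \<in> Pring n"
  unfolding var_def mon_def by (rule Pring_single) simp

lemma Pring_lin: "(lin n :: 'a::comm_ring_1 mpoly) \<in> Pring n"
  unfolding lin_def by (rule Pring_sum) (simp add: Pring_var)

lemma Pring_power: "(p::'a::comm_ring_1 mpoly) \<in> Pring n \<Longrightarrow> p ^ k \<in> Pring n"
  by (induction k) (simp_all add: Pring_one Pring_mult)

lemma gen_ideal_generator: "g \<in> G \<Longrightarrow> g \<in> gen_ideal n G"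
  unfolding gen_ideal_def by (intro CollectI exI[of _ "{g}"] exI[of _ "\<lambda>_. 1"])
      (simp add: Pring_one)

lemma gen_ideal_add:
  assumes "a \<in> gen_ideal n G" "b \<in> gen_ideal n G"
  shows "a + b \<in> gen_ideal n G"
proof -
  obtain F1 q1 where 1: "a = (\<Sum>g\<in>F1. q1 g * g)" "finite F1" "F1 \<subseteq> G" "\<forall>g\<in>F1. q1 g \<in> Pring n"
    using assms(1) unfolding gen_ideal_def by blast
  obtain F2 q2 where 2: "b = (\<Sum>g\<in>F2. q2 g * g)" "finite F2" "F2 \<subseteq> G" "\<forall>g\<in>F2. q2 g \<in> Pring n"
    using assms(2) unfolding gen_ideal_def by blast
  define q where "q g = (if g \<in> F1 then q1 g else 0) + (if g \<in> F2 then q2 g else 0)" for g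
  have "(\<Sum>g\<in>F1 \<union> F2. q g * g) =
      (\<Sum>g\<in>F1 \<union> F2. if g \<in> F1 then q1 g * g else 0) + (\<Sum>g\<in>F1 \<union> F2. if g \<in> F2 then q2 g * g else 0)"
    unfolding sum.distrib[symmetric] by (rule sum.cong) (simp_all add: q_def distrib_right)
  also have "\<dots> = a + b"
  proof -
    have "(F1 \<union> F2) \<inter> F1 = F1" "(F1 \<union> F2) \<inter> F2 = F2" by blast+
    then show ?thesis using 1 2 by (simp add: sum.inter_restrict[symmetric])
  qed
  finally have "a + b = (\<Sum>g\<in>F1 \<union> F2. q g * g)" ..
  moreover have "\<forall>g\<in>F1 \<union> F2. q g \<in> Pring n"
    using 1 2 by (auto simp: q_def intro!: Pring_add Pring_zero)
  ultimately show ?thesis using 1 2 unfolding gen_ideal_def by blast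
qed

lemma gen_ideal_mult:
  assumes "r \<in> Pring n" "a \<in> gen_ideal n G"
  shows "r * a \<in> gen_ideal n G"
proof -
  obtain F q where a: "a = (\<Sum>g\<in>F. q g * g)" "finite F" "F \<subseteq> G" "\<forall>g\<in>F. q g \<in> Pring n"
    using assms(2) unfolding gen_ideal_def by blast
  then have "r * a = (\<Sum>g\<in>F. (r * q g) * g)" "\<forall>g\<in>F. r * q g \<in> Pring n"
    using assms(1) by (simp_all add: sum_distrib_left mult.assoc Pring_mult)
  then show ?thesis
    using a(2,3) unfolding gen_ideal_def
    by (intro CollectI exI[of _ F] exI[of _ "\<lambda>g. r * q g"]) simp
qed

lemma gen_ideal_sum: "(\<And>x. x \<in> A \<Longrightarrow> f x \<in> gen_ideal n G) \<Longrightarrow> sum f A \<in> gen_ideal n G"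
proof (induction A rule: infinite_finite_induct)
  case (infinite A)
  have "0 \<in> gen_ideal n G" unfolding gen_ideal_def by (intro CollectI exI[of _ "{}"]) simp
  then show ?case using infinite by simp
next
  case empty
  have "0 \<in> gen_ideal n G" unfolding gen_ideal_def by (intro CollectI exI[of _ "{}"]) simp
  then show ?case by simp
qed (simp add: gen_ideal_add)

lemma gen_ideal_diff:
  assumes "a \<in> gen_ideal n G" "b \<in> gen_ideal n G"
  shows "a - b \<in> gen_ideal n G"
proof -
  have "- 1 * b \<in> gen_ideal n G" by (rule gen_ideal_mult[OF Pring_uminus[OF Pring_one] assms(2)])
  then show ?thesis using gen_ideal_add[OF assms(1), of "- 1 * b"] by simp
qed

lemma gen_ideal_Pring:
  assumes "G \<subseteq> Pring n"
  shows "gen_ideal n G \<subseteq> Pring n"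
proof
  fix f assume "f \<in> gen_ideal n G"
  then obtain F q where "f = (\<Sum>g\<in>F. q g * g)" "F \<subseteq> G" "\<forall>g\<in>F. q g \<in> Pring n"
    unfolding gen_ideal_def by blast
  then show "f \<in> Pring n" using assms by (auto intro!: Pring_sum Pring_mult)
qed

lemma gen_ideal_subset:
  assumes "X \<subseteq> gen_ideal n Y"
  shows "gen_ideal n X \<subseteq> gen_ideal n Y"
proof
  fix f assume "f \<in> gen_ideal n X"
  then obtain F q where "f = (\<Sum>g\<in>F. q g * g)" "F \<subseteq> X" "\<forall>g\<in>F. q g \<in> Pring n"
    unfolding gen_ideal_def by blast
  then show "f \<in> gen_ideal n Y" using assms by (auto intro!: gen_ideal_sum gen_ideal_mult)
qed

lemma gen_ideal_mono: "X \<subseteq> Y \<Longrightarrow> gen_ideal n X \<subseteq> gen_ideal n Y"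
  unfolding gen_ideal_def by blast

section \<open>Leading monomials of I_n\<close>

lemma In_ideal_lin: "In_ideal n = gen_ideal n ((\<lambda>i. var i ^ 2) ` {1..n} \<union> {lin n ^ 2})"
  by (simp add: In_ideal_def lin_def)

lemma var_sq: "(var i :: 'a::comm_ring_1 mpoly) ^ 2
    = Poly_Mapping.single (Poly_Mapping.single i 2) 1"
proof -
  have "Poly_Mapping.single i (1::nat) + Poly_Mapping.single i 1 = Poly_Mapping.single i 2"
    by (metis one_add_one single_add)
  then show ?thesis by (simp add: power2_eq_square var_def mon_def mult_single)
qed

lemma not_sqfree_square: "\<not> sqfree (Poly_Mapping.single i 2)"
  unfolding sqfree_def by (auto intro!: exI[of _ i])

lemma var_sq_in_In_ideal: "i \<in> {1..n} \<Longrightarrow> var i ^ 2 \<in> In_ideal n"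
  unfolding In_ideal_lin by (intro gen_ideal_generator) blast

lemma lin_sq_mult_in_In_ideal:
  assumes "h \<in> Pring n"
  shows "lin n ^ 2 * h \<in> In_ideal n"
proof -
  have "h * lin n ^ 2 \<in> In_ideal n"
    unfolding In_ideal_lin by (rule gen_ideal_mult[OF assms gen_ideal_generator]) blast
  then show ?thesis by (simp add: mult.commute)
qed

lemma In_ideal_Pring: "In_ideal n \<subseteq> Pring n"
  unfolding In_ideal_lin by (rule gen_ideal_Pring) (auto intro!: Pring_power Pring_var Pring_lin)

lemma poly_mapping_sum_single:
  "p = (\<Sum>m\<in>Poly_Mapping.keys p. Poly_Mapping.single m (Poly_Mapping.lookup p m))"
  by (rule poly_mapping_eqI) (simp add: lookup_sum lookup_single when_def sum.delta in_keys_iff)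

lemma not_sqfree_in_In_ideal:
  assumes "p \<in> Pring n" "\<forall>m\<in>Poly_Mapping.keys p. \<not> sqfree m"
  shows "(p::'a::comm_ring_1 mpoly) \<in> In_ideal n"
proof -
  have "Poly_Mapping.single m (Poly_Mapping.lookup p m) \<in> In_ideal n"
    if m: "m \<in> Poly_Mapping.keys p" for m
  proof -
    obtain i where "mdvd (Poly_Mapping.single i 2) m"
      using assms(2) m not_sqfree_iff_mdvd_square by blast
    then have i: "2 \<le> Poly_Mapping.lookup m i" by (simp add: mdvd_square_iff)
    have keys_m: "Poly_Mapping.keys m \<subseteq> {1..n}" using assms(1) m unfolding Pring_def by blast
    moreover have "i \<in> Poly_Mapping.keys m" using i by (simp add: in_keys_iff)
    ultimately have "i \<in> {1..n}" by blast
    define m' where "m' = m - Poly_Mapping.single i 2"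
    have "m' + Poly_Mapping.single i 2 = m"
      by (rule poly_mapping_eqI)
        (use i in \<open>auto simp: m'_def lookup_add lookup_minus lookup_single when_def\<close>)
    then have "Poly_Mapping.single m (Poly_Mapping.lookup p m)
        = Poly_Mapping.single m' (Poly_Mapping.lookup p m) * var i ^ 2"
      by (simp add: var_sq mult_single)
    moreover have "Poly_Mapping.keys m' \<subseteq> {1..n}"
      using keys_m by (auto simp: m'_def in_keys_iff lookup_minus)
    ultimately show ?thesis
      using gen_ideal_mult[OF Pring_single
          var_sq_in_In_ideal[OF \<open>i \<in> {1..n}\<close>, unfolded In_ideal_def]]
      by (simp add: In_ideal_def)
  qed
  then have "(\<Sum>m\<in>Poly_Mapping.keys p. Poly_Mapping.single m (Poly_Mapping.lookup p m)) \<in> In_ideal n"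
    unfolding In_ideal_def by (intro gen_ideal_sum) (simp add: In_ideal_def)
  then show ?thesis using poly_mapping_sum_single[of p] by simp
qed

lemma sqfree_part_in_In_ideal:
  assumes "f \<in> In_ideal n"
  shows "sqfree_part f \<in> In_ideal n"
proof -
  have "f \<in> Pring n" using assms In_ideal_Pring by blast
  then have "f - sqfree_part f \<in> Pring n"
    by (intro Pring_diff) (simp_all add: sqfree_part_Pring Pring_poly_of_setfun)
  then have "f - sqfree_part f \<in> In_ideal n"
    by (rule not_sqfree_in_In_ideal) (auto simp: in_keys_iff lookup_minus lookup_sqfree_part)
  then have "f - (f - sqfree_part f) \<in> In_ideal n"
    using assms unfolding In_ideal_def by (rule gen_ideal_diff[rotated])
  then show ?thesis by simp
qed

lemma sqfree_part_In_ideal: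
  assumes "f \<in> In_ideal n"
  shows "\<exists>\<phi>. sqfree_part (f::'a::comm_ring_1 mpoly) = poly_of_setfun n ((lefschetz ^^ 2) \<phi>)"
proof -
  obtain F q where f: "f = (\<Sum>g\<in>F. q g * g)" "finite F" "F \<subseteq> (\<lambda>i. var i ^ 2) ` {1..n} \<union> {lin n ^ 2}"
      "\<forall>g\<in>F. q g \<in> Pring n"
    using assms unfolding In_ideal_lin gen_ideal_def by blast
  define \<phi> where "\<phi> S = (if lin n ^ 2 \<in> F then Poly_Mapping.lookup (q (lin n ^ 2))
      (monom_of_set S) else 0)" for S
  have "sqfree_part (q g * g) =
      (if g = lin n ^ 2 then poly_of_setfun n ((lefschetz ^^ 2) \<phi>) else 0)"
    if g: "g \<in> F" for g
  proof (cases "g = lin n ^ 2")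
    case True
    have "sqfree_part (q g * g) = sqfree_part (lin n ^ 2 * sqfree_part (q g))"
      using True by (simp add: mult.commute sqfree_part_mult_right[symmetric])
    also have "\<dots> = poly_of_setfun n ((lefschetz ^^ 2) \<phi>)"
      using True g f(4)[rule_format, OF g]
      by (simp add: sqfree_part_Pring sqfree_part_lin_sq_mult \<phi>_def[abs_def])
    finally show ?thesis using True by simp
  next
    case False
    then obtain i where "g = var i ^ 2" using g f(3) by blast
    then have "sqfree_part (q g * g) = 0"
      by (intro sqfree_part_mult_eq_0) (simp add: var_sq not_sqfree_square)
    then show ?thesis using False by simp
  qed
  then have "sqfree_part f =
      (\<Sum>g\<in>F. if g = lin n ^ 2 then poly_of_setfun n ((lefschetz ^^ 2) \<phi>) else 0)"
    unfolding f(1) sqfree_part_sum by (rule sum.cong[OF refl])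
  also have "\<dots> = poly_of_setfun n ((lefschetz ^^ 2) \<phi>)"
    using f(2) by (cases "lin n ^ 2 \<in> F") (simp_all add: sum.delta \<phi>_def[abs_def])
  finally show ?thesis by blast
qed

lemma gen_ideal_mon_mdvd:
  assumes "p \<in> gen_ideal n ((mon :: monom \<Rightarrow> 'a::comm_ring_1 mpoly) ` M)" "k \<in> Poly_Mapping.keys p"
  shows "\<exists>m\<in>M. mdvd m k"
proof -
  obtain F q where p: "p = (\<Sum>g\<in>F. q g * g)" "F \<subseteq> mon ` M"
    using assms(1) unfolding gen_ideal_def by blast
  then obtain g where g: "g \<in> F" "k \<in> Poly_Mapping.keys (q g * g)"
    using assms(2) keys_sum[of "\<lambda>g. q g * g" F] by blast
  then obtain m where m: "m \<in> M" "g = mon m" using p(2) by blast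
  then obtain a where "k = a + m" using g keys_mult[of "q g" g] by (auto simp: mon_def)
  then show ?thesis using m(1) by (intro bexI[of _ m]) (auto simp: mdvd_def lookup_add)
qed

lemma minimal_generators_monomial_ideal:
  assumes "M \<subseteq> L" "\<And>l. l \<in> L \<Longrightarrow> Poly_Mapping.keys l \<subseteq> {1..n}"
    and "\<And>l. l \<in> L \<Longrightarrow> \<exists>m\<in>M. mdvd m l"
    and "\<And>a b. a \<in> M \<Longrightarrow> b \<in> M \<Longrightarrow> mdvd a b \<Longrightarrow> a = b"
  shows "minimal_generators n ((mon :: monom \<Rightarrow> 'a::comm_ring_1 mpoly) ` M) (gen_ideal n (mon ` L))"
proof -
  have "mon l \<in> gen_ideal n ((mon :: monom \<Rightarrow> 'a mpoly) ` M)" if l: "l \<in> L" for l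
  proof -
    obtain m where m: "m \<in> M" "mdvd m l" using assms(3)[OF l] by blast
    have "(l - m) + m = l"
      by (rule poly_mapping_eqI) (use m(2) in \<open>simp add: lookup_add lookup_minus mdvd_def\<close>)
    then have "mon l = mon (l - m) * (mon m :: 'a mpoly)" by (simp add: mon_def mult_single)
    moreover have "Poly_Mapping.keys (l - m) \<subseteq> {1..n}"
      using assms(2)[OF l] by (auto simp: in_keys_iff lookup_minus)
    then have "(mon (l - m) :: 'a mpoly) \<in> Pring n" unfolding mon_def by (rule Pring_single)
    moreover have "(mon m :: 'a mpoly) \<in> gen_ideal n (mon ` M)" using m(1)
      by (intro gen_ideal_generator) blast
    ultimately show ?thesis by (simp add: gen_ideal_mult)
  qed
  then have generated: "gen_ideal n ((mon :: monom \<Rightarrow> 'a mpoly) ` M) = gen_ideal n (mon ` L)"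
    using gen_ideal_mono[of "mon ` M" "mon ` L" n] gen_ideal_subset[of "mon ` L" n "mon ` M"]
      assms(1)
    by blast
  have "gen_ideal n ((mon :: monom \<Rightarrow> 'a mpoly) ` M - {mon m}) \<noteq> gen_ideal n (mon ` L)"
    if "m \<in> M" for m
  proof
    have mon_inj: "mon a = (mon b :: 'a mpoly) \<longleftrightarrow> a = b" for a b
      unfolding mon_def by (metis lookup_single_eq lookup_single_not_eq zero_neq_one)
    assume "gen_ideal n ((mon :: monom \<Rightarrow> 'a mpoly) ` M - {mon m}) = gen_ideal n (mon ` L)"
    moreover have "(mon m :: 'a mpoly) \<in> gen_ideal n (mon ` M)" using that
      by (intro gen_ideal_generator) blast
    moreover have "mon ` M - {mon m} = (mon :: monom \<Rightarrow> 'a mpoly) ` (M - {m})" using mon_inj by auto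
    ultimately have "(mon m :: 'a mpoly) \<in> gen_ideal n (mon ` (M - {m}))" using generated by simp
    moreover have "m \<in> Poly_Mapping.keys (mon m :: 'a mpoly)" by (simp add: mon_def)
    ultimately obtain m' where "m' \<in> M - {m}" "mdvd m' m" using gen_ideal_mon_mdvd by blast
    then show False using assms(4) that by blast
  qed
  with generated show ?thesis unfolding minimal_generators_def by blast
qed

lemma lead_monom_poly_of_setfun:
  assumes "S \<subseteq> {1..n}" "\<psi> S \<noteq> 0"
    and "\<And>T. T \<subseteq> {1..n} \<Longrightarrow> T \<noteq> S \<Longrightarrow> \<psi> T \<noteq> 0 \<Longrightarrow> card T = card S \<and> revlex_less_set T S"
  shows "lead_monom (poly_of_setfun n \<psi>) = monom_of_set S"
proof (rule lead_monom_eqI)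
  have finS: "finite S" using assms(1) finite_subset by blast
  show "monom_of_set S \<in> Poly_Mapping.keys (poly_of_setfun n \<psi>)"
    using assms(1,2) by (simp add: in_keys_iff lookup_poly_of_setfun_monom_of_set)
  show "\<forall>m\<in>Poly_Mapping.keys (poly_of_setfun n \<psi>). m \<noteq> monom_of_set S \<longrightarrow> drl_less m (monom_of_set S)"
  proof (intro ballI impI)
    fix m assume m: "m \<in> Poly_Mapping.keys (poly_of_setfun n \<psi>)" "m \<noteq> monom_of_set S"
    define T where "T = Poly_Mapping.keys m"
    have "Poly_Mapping.lookup (poly_of_setfun n \<psi>) m \<noteq> 0" using m(1) by (simp add: in_keys_iff)
    then have T: "sqfree m" "T \<subseteq> {1..n}" "\<psi> T \<noteq> 0"
      unfolding lookup_poly_of_setfun T_def by (simp_all split: if_splits)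
    have "finite T" unfolding T_def by simp
    have mT: "m = monom_of_set T" unfolding T_def using T(1) by (rule sqfree_eq_monom_of_set)
    then have "T \<noteq> S" using m(2) by auto
    then have "card T = card S \<and> revlex_less_set T S" using assms(3) T(2,3) by blast
    then show "drl_less m (monom_of_set S)"
      unfolding mT using drl_less_monom_of_set_iff[OF \<open>finite T\<close> finS] by blast
  qed
qed

theorem monom_of_set_is_leading:
  fixes k n :: nat
  assumes "2 \<le> k" "2*k - 2 \<le> n" "S \<subseteq> {1..2*k - 2}" "card S = k"
  shows "\<exists>f \<in> (In_ideal n :: 'a::field_char_0 mpoly set). f \<noteq> 0 \<and> lead_monom f = monom_of_set S"
proof -
  obtain \<phi> :: "nat set \<Rightarrow> 'a" where \<phi>:
    "agree_on_level (2*k - 2) (k - 2 + 2) ((lefschetz ^^ 2) \<phi>) (\<lambda>T. if T = S then 1 else 0)"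
    using lefschetz_pow_surjective[of "2*k - 2" "k - 2" 2] assms(1) by fastforce
  define \<phi>' where "\<phi>' T = (if T \<subseteq> {1..2*k - 2} \<and> card T = k - 2 then \<phi> T else 0)" for T
  have off_level: "(lefschetz ^^ 2) \<phi>' T = 0" if "finite T" "card T \<noteq> k" for T
  proof -
    have "(lefschetz ^^ 2) \<phi>' T = (lefschetz ^^ 2) (\<lambda>_. 0) T"
      by (rule lefschetz_pow_local) (use that assms(1) in \<open>auto simp: \<phi>'_def\<close>)
    then show ?thesis by simp
  qed
  have low: "(lefschetz ^^ 2) \<phi>' T = (if T = S then 1 else 0)" if T: "T \<subseteq> {1..2*k - 2}" "card T
      = k" for T
  proof -
    have "(lefschetz ^^ 2) \<phi>' T = (lefschetz ^^ 2) \<phi> T"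
      by (rule lefschetz_pow_local) (use T finite_subset in \<open>auto simp: \<phi>'_def\<close>)
    then show ?thesis using \<phi> T assms(1) unfolding agree_on_level_def by simp
  qed
  define f where "f = (poly_of_setfun n ((lefschetz ^^ 2) \<phi>') :: 'a mpoly)"
  have "f \<in> In_ideal n"
    using sqfree_part_in_In_ideal[OF lin_sq_mult_in_In_ideal[OF Pring_poly_of_setfun]]
    by (simp add: f_def sqfree_part_lin_sq_mult)
  moreover have "lead_monom f = monom_of_set S"
    unfolding f_def
  proof (rule lead_monom_poly_of_setfun)
    show "S \<subseteq> {1..n}" "(lefschetz ^^ 2) \<phi>' S \<noteq> 0" using assms(2-4) low by auto
    fix T assume T: "T \<subseteq> {1..n}" "T \<noteq> S" "(lefschetz ^^ 2) \<phi>' T \<noteq> 0"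
    then have "finite T" using finite_subset by blast
    then have "card T = k" using off_level T(3) by blast
    then obtain x where "x \<in> T" "x \<notin> {1..2*k - 2}" using low T by (metis subsetI)
    then have "\<forall>y\<in>S. y < x" using T(1) assms(3) by fastforce
    then show "card T = card S \<and> revlex_less_set T S"
      using revlex_less_set_of_greater[OF \<open>finite T\<close> \<open>x \<in> T\<close>] \<open>card T = k\<close> assms(4) by simp
  qed
  moreover have "S \<subseteq> {1..n}" using assms(2,3) by auto
  then have "Poly_Mapping.lookup f (monom_of_set S) = 1"
    using assms(3,4) low by (simp add: f_def lookup_poly_of_setfun_monom_of_set)
  then have "f \<noteq> 0" by auto
  ultimately show ?thesis by blast
qed

lemma keys_lead_monom_In_ideal:
  assumes "f \<in> In_ideal n" "f \<noteq> 0"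
  shows "Poly_Mapping.keys (lead_monom f) \<subseteq> {1..n}"
  using assms In_ideal_Pring lead_monom_max(1)[OF assms(2)] unfolding Pring_def by blast

lemma lead_monom_In_ideal_crowded:
  fixes f :: "'a::field_char_0 mpoly"
  assumes "f \<in> In_ideal n" "f \<noteq> 0" "sqfree (lead_monom f)"
  shows "\<exists>k. crowded_at (Poly_Mapping.keys (lead_monom f)) k"
proof -
  define S where "S = Poly_Mapping.keys (lead_monom f)"
  have S: "lead_monom f = monom_of_set S" "finite S" "S \<subseteq> {1..n}"
    using sqfree_eq_monom_of_set[OF assms(3)] keys_lead_monom_In_ideal[OF assms(1,2)]
      by (simp_all add: S_def)
  obtain \<phi> where \<phi>: "sqfree_part f = poly_of_setfun n ((lefschetz ^^ 2) \<phi>)"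
    using sqfree_part_In_ideal[OF assms(1)] by blast
  have coeff: "Poly_Mapping.lookup f (monom_of_set T) = (lefschetz ^^ 2) \<phi> T" if "T \<subseteq> {1..n}" for T
  proof -
    have "finite T" using that finite_subset by blast
    then have "Poly_Mapping.lookup f (monom_of_set T) = Poly_Mapping.lookup (sqfree_part f)
        (monom_of_set T)"
      by (simp add: lookup_sqfree_part sqfree_monom_of_set)
    then show ?thesis using \<phi> that by (simp add: lookup_poly_of_setfun_monom_of_set)
  qed
  have "\<exists>k. crowded_at S k"
  proof (rule lefschetz_sq_revlex_max_crowded[OF S(3)])
    show "(lefschetz ^^ 2) \<phi> S \<noteq> 0"
      using lead_monom_max(1)[OF assms(2)] S coeff by (simp add: in_keys_iff)
    fix T assume T: "T \<subseteq> {1..n}" "card T = card S" "T \<noteq> S" "(lefschetz ^^ 2) \<phi> T \<noteq> 0"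
    have "finite T" using T(1) finite_subset by blast
    have "monom_of_set T \<in> Poly_Mapping.keys f" using coeff T by (simp add: in_keys_iff)
    moreover have "monom_of_set T \<noteq> lead_monom f"
      using S T(3) \<open>finite T\<close> keys_monom_of_set by metis
    ultimately have "drl_less (monom_of_set T) (monom_of_set S)"
      using lead_monom_max(2)[OF assms(2)] S(1) by simp
    then show "revlex_less_set T S" using drl_less_monom_of_set_iff[OF \<open>finite T\<close> S(2) T(2)] by simp
  qed
  then show ?thesis by (simp add: S_def)
qed

definition initial_gens :: "nat \<Rightarrow> monom set" where
  "initial_gens n = (\<lambda>i. Poly_Mapping.single i 2) ` {1..n} \<union> (\<Union>k\<in>{k. 2 \<le> k \<and> 2*k - 2 \<le> n}. D k)"

lemma initial_gens_leading:
  assumes "m \<in> initial_gens n"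
  shows "\<exists>f \<in> (In_ideal n :: 'a::field_char_0 mpoly set). f \<noteq> 0 \<and> lead_monom f = m"
  using assms unfolding initial_gens_def
proof (elim UnE)
  assume "m \<in> (\<lambda>i. Poly_Mapping.single i 2) ` {1..n}"
  then obtain i where i: "i \<in> {1..n}" "m = Poly_Mapping.single i 2" by blast
  have "lead_monom ((var i :: 'a mpoly) ^ 2) = m"
    by (rule lead_monom_eqI) (simp_all add: var_sq i(2))
  moreover have "(var i :: 'a mpoly) ^ 2 \<noteq> 0"
    by (metis var_sq lookup_single_eq lookup_zero one_neq_zero)
  ultimately show ?thesis using var_sq_in_In_ideal[OF i(1)] by blast
next
  assume "m \<in> (\<Union>k\<in>{k. 2 \<le> k \<and> 2*k - 2 \<le> n}. D k)"
  then obtain k T where "2 \<le> k" "2*k - 2 \<le> n" "m = monom_of_set T" "T \<subseteq> {1..2*k - 2}" "card T = k"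
    unfolding D_eq by blast
  then show ?thesis using monom_of_set_is_leading by blast
qed

lemma lead_monom_In_ideal_divisible:
  fixes f :: "'a::field_char_0 mpoly"
  assumes "f \<in> In_ideal n" "f \<noteq> 0"
  shows "\<exists>m\<in>initial_gens n. mdvd m (lead_monom f)"
proof (cases "sqfree (lead_monom f)")
  case False
  then obtain i where i: "mdvd (Poly_Mapping.single i 2) (lead_monom f)"
    using not_sqfree_iff_mdvd_square by blast
  then have "i \<in> Poly_Mapping.keys (lead_monom f)" by (simp add: mdvd_square_iff in_keys_iff)
  then have "i \<in> {1..n}" using keys_lead_monom_In_ideal[OF assms] by blast
  then show ?thesis using i unfolding initial_gens_def by blast
next
  case True
  then obtain k where "crowded_at (Poly_Mapping.keys (lead_monom f)) k"
    using lead_monom_In_ideal_crowded[OF assms] by blast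
  then show ?thesis
    using crowded_has_D_divisor[OF keys_lead_monom_In_ideal[OF assms]]
      sqfree_eq_monom_of_set[OF True]
    unfolding initial_gens_def by fastforce
qed

lemma initial_gens_antichain:
  assumes "a \<in> initial_gens n" "b \<in> initial_gens n" "mdvd a b"
  shows "a = b"
proof -
  have D_cases: "\<exists>T. m = monom_of_set T \<and> finite T \<and> card T = k \<and> 2 \<le> k \<and> T \<subseteq> {1..2*k - 2} \<and>
      (\<forall>k'<k. \<not> crowded_at T k')" if "m \<in> D k" "2 \<le> k" for m k
    using that unfolding D_eq by (auto intro: finite_subset)
  consider (squares) i j where "a = Poly_Mapping.single i 2" "b = Poly_Mapping.single j 2"
    | (square_D) i k where "a = Poly_Mapping.single i 2" "b \<in> D k" "2 \<le> k"
    | (D_square) k j where "a \<in> D k" "2 \<le> k" "b = Poly_Mapping.single j 2"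
    | (D_D) k1 k2 where "a \<in> D k1" "2 \<le> k1" "b \<in> D k2" "2 \<le> k2"
    using assms(1,2) unfolding initial_gens_def by blast
  then show ?thesis
  proof cases
    case squares
    then show ?thesis
      using assms(3) by (auto simp: mdvd_square_iff lookup_single when_def split: if_splits)
  next
    case square_D
    then show ?thesis
      using assms(3) D_cases[OF square_D(2,3)] sqfree_monom_of_set not_sqfree_iff_mdvd_square
        by blast
  next
    case D_square
    then obtain T where T: "a = monom_of_set T" "finite T" "card T = k" using D_cases by blast
    then have "T \<subseteq> {j}" using mdvd_keys[OF assms(3)] D_square(3) by (simp add: keys_monom_of_set)
    then have "card T \<le> 1" using card_mono[of "{j}" T] by simp
    then show ?thesis using T D_square(2) by simp
  next
    case D_D
    obtain T1 where T1: "a = monom_of_set T1" "finite T1" "card T1 = k1" "T1 \<subseteq> {1..2*k1 - 2}"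
      using D_cases[OF D_D(1,2)] by blast
    obtain T2 where T2: "b = monom_of_set T2" "finite T2" "card T2 = k2"
        "\<forall>k'<k2. \<not> crowded_at T2 k'"
      using D_cases[OF D_D(3,4)] by blast
    have "T1 \<subseteq> T2" using assms(3) T1 T2 by (simp add: mdvd_monom_of_set_iff)
    then have "k1 \<le> k2" using T1 T2 card_mono by blast
    moreover have "crowded_at T1 k1" using T1 D_D(2) unfolding crowded_at_def
      by (simp add: Int_absorb2)
    then have "crowded_at T2 k1" using crowded_at_mono \<open>T1 \<subseteq> T2\<close> T2(2) by blast
    ultimately have "k1 = k2" using T2(4) le_neq_implies_less by blast
    then have "T1 = T2" using \<open>T1 \<subseteq> T2\<close> T1 T2 card_subset_eq by metis
    then show ?thesis using T1 T2 by simp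
  qed
qed

theorem mainTheorem5:
  fixes n :: nat
  shows "minimal_generators n
           ((mon :: monom \<Rightarrow> 'a::field_char_0 mpoly) `
              ((\<lambda>i. Poly_Mapping.single i 2) ` {1..n} \<union> (\<Union>k\<in>{k. 2 \<le> k \<and> 2*k-2 \<le> n}. D k)))
           (initial_ideal n (In_ideal n :: 'a mpoly set))"
proof -
  let ?L = "lead_monom ` {f \<in> (In_ideal n :: 'a mpoly set). f \<noteq> 0}"
  have "initial_ideal n (In_ideal n :: 'a mpoly set) = gen_ideal n (mon ` ?L)"
    unfolding initial_ideal_def by (rule arg_cong[where f = "gen_ideal n"]) blast
  moreover have "minimal_generators n ((mon :: monom \<Rightarrow> 'a mpoly) ` initial_gens n)
      (gen_ideal n (mon ` ?L))"
  proof (rule minimal_generators_monomial_ideal)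
    show "initial_gens n \<subseteq> ?L" using initial_gens_leading by fastforce
    show "Poly_Mapping.keys l \<subseteq> {1..n}" if "l \<in> ?L" for l
      using that keys_lead_monom_In_ideal by blast
    show "\<exists>m\<in>initial_gens n. mdvd m l" if "l \<in> ?L" for l
      using that lead_monom_In_ideal_divisible by blast
  qed (rule initial_gens_antichain)
  ultimately show ?thesis unfolding initial_gens_def by simp
qed

end
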